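(* There is an arithmetical comprehension term $\mathsf{disj}(X,Y)$ such that $\mathsf{ACA}_0$ proves, for all linear orders $\alpha,\beta$: (1) $\mathsf{disj}(\alpha,\beta)$ is a linear order; (2) $\mathsf{WO}(\mathsf{disj}(\alpha,\beta))\leftrightarrow\mathsf{WO}(\alpha)\vee\mathsf{WO}(\beta)$; (3) if there is an infinite descending chain $b_0\succ_\beta b_1\succ_\beta\cdots$ in $\beta$, then there is an embedding (order-preserving map) $f\colon\alpha\to\mathsf{disj}(\alpha,\beta)$.
   Context: Linear orders are pairs $\alpha=\langle D_\alpha,\prec_\alpha\rangle$ with $D_\alpha\subseteq\mathbb N$ and $\prec_\alpha$ a strict linear order on $D_\alpha$; $\mathsf{WO}(\alpha)$ says $\alpha$ is well-ordered. An arithmetical comprehension term is a term $\{x:\theta(x,X,Y)\}$ with $\theta$ arithmetical, whose existence is guaranteed by arithmetical comprehension. *)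

theory Defs
  imports Main
begin

text \<open>Semantic rendering of "ACA0 proves": truth in every (countable, hence w.l.o.g.
  with first-order domain the type nat) L2-structure satisfying the axioms of ACA0,
  in the sense of Simpson's SOSOA: first-order part with 0,1,+,*,<, second-order part
  a family of subsets of the first-order domain.\<close>

record L2struct =
  zr :: nat
  on :: nat
  pl :: "nat \<Rightarrow> nat \<Rightarrow> nat"
  tm :: "nat \<Rightarrow> nat \<Rightarrow> nat"
  ls :: "nat \<Rightarrow> nat \<Rightarrow> bool"
  sets :: "nat set set"

datatype trm = Var nat | Zero | One | Add trm trm | Mul trm trm

datatype afm = Less trm trm | Equ trm trm | In trm nat
  | Neg afm | Conj afm afm | ExN nat afm

fun ev :: "L2struct \<Rightarrow> (nat \<Rightarrow> nat) \<Rightarrow> trm \<Rightarrow> nat" where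
  "ev M e (Var v) = e v"
| "ev M e Zero = zr M"
| "ev M e One = on M"
| "ev M e (Add s t) = pl M (ev M e s) (ev M e t)"
| "ev M e (Mul s t) = tm M (ev M e s) (ev M e t)"

fun sat :: "L2struct \<Rightarrow> (nat \<Rightarrow> nat) \<Rightarrow> (nat \<Rightarrow> nat set) \<Rightarrow> afm \<Rightarrow> bool" where
  "sat M e E (Less s t) = ls M (ev M e s) (ev M e t)"
| "sat M e E (Equ s t) = (ev M e s = ev M e t)"
| "sat M e E (In t X) = (ev M e t \<in> E X)"
| "sat M e E (Neg p) = (\<not> sat M e E p)"
| "sat M e E (Conj p q) = (sat M e E p \<and> sat M e E q)"
| "sat M e E (ExN v p) = (\<exists>a. sat M (e(v := a)) E p)"

definition ACA0_model :: "L2struct \<Rightarrow> bool" where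
  "ACA0_model M \<longleftrightarrow>
     (\<forall>m. pl M m (on M) \<noteq> zr M) \<and>
     (\<forall>m n. pl M m (on M) = pl M n (on M) \<longrightarrow> m = n) \<and>
     (\<forall>m. pl M m (zr M) = m) \<and>
     (\<forall>m n. pl M m (pl M n (on M)) = pl M (pl M m n) (on M)) \<and>
     (\<forall>m. tm M m (zr M) = zr M) \<and>
     (\<forall>m n. tm M m (pl M n (on M)) = pl M (tm M m n) m) \<and>
     (\<forall>m. \<not> ls M m (zr M)) \<and>
     (\<forall>m n. ls M m (pl M n (on M)) \<longleftrightarrow> ls M m n \<or> m = n) \<and>
     \<comment> \<open>induction axiom\<close>
     (\<forall>X\<in>sets M. zr M \<in> X \<and> (\<forall>n. n \<in> X \<longrightarrow> pl M n (on M) \<in> X) \<longrightarrow> (\<forall>n. n \<in> X)) \<and>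
     \<comment> \<open>arithmetical comprehension scheme\<close>
     (\<forall>p e E v. (\<forall>i. E i \<in> sets M) \<longrightarrow> {a. sat M (e(v := a)) E p} \<in> sets M)"

definition pr :: "L2struct \<Rightarrow> nat \<Rightarrow> nat \<Rightarrow> nat" where
  "pr M i j = pl M (tm M (pl M i j) (pl M i j)) i"

definition LO :: "L2struct \<Rightarrow> nat set \<Rightarrow> nat set \<Rightarrow> bool" where
  "LO M D R \<longleftrightarrow>
     (\<forall>x y. pr M x y \<in> R \<longrightarrow> x \<in> D \<and> y \<in> D) \<and>
     (\<forall>x. pr M x x \<notin> R) \<and>
     (\<forall>x y z. pr M x y \<in> R \<and> pr M y z \<in> R \<longrightarrow> pr M x z \<in> R) \<and>
     (\<forall>x\<in>D. \<forall>y\<in>D. pr M x y \<in> R \<or> x = y \<or> pr M y x \<in> R)"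

definition desc_seq :: "L2struct \<Rightarrow> nat set \<Rightarrow> nat set \<Rightarrow> nat set \<Rightarrow> bool" where
  "desc_seq M D R F \<longleftrightarrow>
     (\<forall>i. \<exists>!y. pr M i y \<in> F) \<and>
     (\<forall>i y y'. pr M i y \<in> F \<and> pr M (pl M i (on M)) y' \<in> F
        \<longrightarrow> y \<in> D \<and> y' \<in> D \<and> pr M y' y \<in> R)"

definition WO :: "L2struct \<Rightarrow> nat set \<Rightarrow> nat set \<Rightarrow> bool" where
  "WO M D R \<longleftrightarrow> LO M D R \<and> \<not> (\<exists>F\<in>sets M. desc_seq M D R F)"

definition embedding :: "L2struct \<Rightarrow> nat set \<Rightarrow> nat set \<Rightarrow> nat set \<Rightarrow> nat set \<Rightarrow> nat set \<Rightarrow> bool" where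
  "embedding M F D1 R1 D2 R2 \<longleftrightarrow>
     (\<forall>x\<in>D1. \<exists>!y. pr M x y \<in> F) \<and>
     (\<forall>x y. pr M x y \<in> F \<longrightarrow> x \<in> D1 \<and> y \<in> D2) \<and>
     (\<forall>x x' y y'. pr M x y \<in> F \<and> pr M x' y' \<in> F \<and> pr M x x' \<in> R1 \<longrightarrow> pr M y y' \<in> R2)"

text \<open>Set environment: set variables 0,1 are D_alpha, R_alpha; 2,3 are D_beta, R_beta.\<close>
definition env4 :: "nat set \<Rightarrow> nat set \<Rightarrow> nat set \<Rightarrow> nat set \<Rightarrow> nat \<Rightarrow> nat set" where
  "env4 A B C D i = (if i = 1 then B else if i = 2 then C else if i = 3 then D else A)"

text \<open>The comprehension term {x : theta(x, X, Y)}, x being number variable 0.\<close>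
definition cterm :: "L2struct \<Rightarrow> afm \<Rightarrow> (nat \<Rightarrow> nat) \<Rightarrow> nat set \<Rightarrow> nat set \<Rightarrow> nat set \<Rightarrow> nat set \<Rightarrow> nat set" where
  "cterm M p e DA RA DB RB = {a. sat M (e(0 := a)) (env4 DA RA DB RB) p}"

end

theory Submission
  imports Defs
begin

text \<open>
  \<open>disj(\<alpha>, \<beta>)\<close> is the Kleene-Brouwer order on the tree of finite sequences
  \<open>(x\<^sub>0, w\<^sub>0), \<dots>, (x\<^sub>k, w\<^sub>k)\<close> that descend in \<open>\<alpha>\<close> in the first
  and in \<open>\<beta>\<close> in the second component, each sequence being represented by its least code.
  The Kleene-Brouwer order of a tree is linear. Along an infinite descending sequence in it, the
  \<open>n\<close>-th entries are eventually non-increasing, hence eventually constant, and the limits form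
  an infinite path through the tree, i.e. descending sequences in both \<open>\<alpha>\<close> and \<open>\<beta>\<close>.
  Conversely, if \<open>\<beta>\<close> is ill-founded then \<open>\<alpha>\<close> embeds into \<open>disj(\<alpha>, \<beta>)\<close>, and
  the embedding maps a descending sequence in \<open>\<alpha>\<close> to one in \<open>disj(\<alpha>, \<beta>)\<close>.

  Given a descending sequence \<open>w\<^sub>0 \<succ> w\<^sub>1 \<succ> \<dots>\<close> in \<open>\<beta>\<close>, the element \<open>a\<close> of
  \<open>\<alpha>\<close> is sent to its greedy sequence \<open>(x\<^sub>0, w\<^sub>0), \<dots>, (x\<^sub>m, w\<^sub>m)\<close>: \<open>x\<^sub>0\<close> is the
  numerically least element \<open>\<succeq> a\<close> and \<open>x\<^bsub>j+1\<^esub>\<close> the numerically least element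
  \<open>\<succeq> a\<close> below \<open>x\<^sub>j\<close>, until \<open>x\<^sub>m = a\<close>; this takes at most \<open>a + 1\<close> steps, as
  \<open>j \<le> x\<^sub>j \<le> a\<close> numerically. If \<open>a \<prec> a'\<close>, the greedy sequence of \<open>a\<close> lies to
  the left of that of \<open>a'\<close> in the Kleene-Brouwer order.

  All of this happens inside an arbitrary model of \<open>ACA\<^sub>0\<close>, so elementary arithmetic, the
  coding of finite sequences by Goedel's \<open>\<beta>\<close>-function and every induction are carried out
  internally.
\<close>

definition Or :: "afm \<Rightarrow> afm \<Rightarrow> afm" where "Or p q = Neg (Conj (Neg p) (Neg q))"
definition Imp :: "afm \<Rightarrow> afm \<Rightarrow> afm" where "Imp p q = Neg (Conj p (Neg q))"
definition AllN :: "nat \<Rightarrow> afm \<Rightarrow> afm" where "AllN v p = Neg (ExN v (Neg p))"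
definition Iff :: "afm \<Rightarrow> afm \<Rightarrow> afm" where "Iff p q = Conj (Imp p q) (Imp q p)"
definition Leq :: "trm \<Rightarrow> trm \<Rightarrow> afm" where "Leq s t = Or (Less s t) (Equ s t)"
definition PairT :: "trm \<Rightarrow> trm \<Rightarrow> trm" where "PairT s t = Add (Mul (Add s t) (Add s t)) s"

lemma sat_derived[simp]:
  "sat M e E (Or p q) = (sat M e E p \<or> sat M e E q)"
  "sat M e E (Imp p q) = (sat M e E p \<longrightarrow> sat M e E q)"
  "sat M e E (AllN v p) = (\<forall>a. sat M (e(v:=a)) E p)"
  "sat M e E (Iff p q) = (sat M e E p \<longleftrightarrow> sat M e E q)"
  "sat M e E (Leq s t) = (ls M (ev M e s) (ev M e t) \<or> ev M e s = ev M e t)"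
  by (auto simp: Or_def Imp_def AllN_def Iff_def Leq_def)

lemma ev_PairT[simp]: "ev M e (PairT s t) = pr M (ev M e s) (ev M e t)"
  by (simp add: PairT_def pr_def)

fun tvars :: "trm \<Rightarrow> nat set" where
  "tvars (Var v) = {v}"
| "tvars Zero = {}"
| "tvars One = {}"
| "tvars (Add s t) = tvars s \<union> tvars t"
| "tvars (Mul s t) = tvars s \<union> tvars t"

lemma tvars_PairT[simp]: "tvars (PairT s t) = tvars s \<union> tvars t"
  by (auto simp: PairT_def)

lemma ev_upd[simp]: "v \<notin> tvars t \<Longrightarrow> ev M (e(v:=a)) t = ev M e t"
  by (induction t) auto

section \<open>Elementary arithmetic in a model of \<open>ACA\<^sub>0\<close>\<close>

locale aca0 =
  fixes M :: L2struct
  assumes model: "ACA0_model M"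
    and sets_nonempty: "sets M \<noteq> {}"
begin

abbreviation zero_M ("\<zero>") where "\<zero> \<equiv> zr M"
abbreviation one_M ("\<one>") where "\<one> \<equiv> on M"
abbreviation add_M (infixl "\<oplus>" 65) where "x \<oplus> y \<equiv> pl M x y"
abbreviation mult_M (infixl "\<otimes>" 70) where "x \<otimes> y \<equiv> tm M x y"
abbreviation less_M (infix "\<prec>" 50) where "x \<prec> y \<equiv> ls M x y"
abbreviation less_eq_M (infix "\<preceq>" 50) where "x \<preceq> y \<equiv> x \<prec> y \<or> x = y"

lemma suc_ne_zero[simp]: "x \<oplus> \<one> \<noteq> \<zero>"
  and suc_inj: "x \<oplus> \<one> = y \<oplus> \<one> \<longleftrightarrow> x = y"
  and add_0_right[simp]: "x \<oplus> \<zero> = x"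
  and add_suc: "x \<oplus> (y \<oplus> \<one>) = (x \<oplus> y) \<oplus> \<one>"
  and mult_0_right[simp]: "x \<otimes> \<zero> = \<zero>"
  and mult_suc: "x \<otimes> (y \<oplus> \<one>) = x \<otimes> y \<oplus> x"
  and not_less_zero[simp]: "\<not> x \<prec> \<zero>"
  and less_suc: "x \<prec> y \<oplus> \<one> \<longleftrightarrow> x \<preceq> y"
  using model unfolding ACA0_model_def by auto

lemmas peano_axioms = suc_ne_zero suc_inj add_0_right add_suc mult_0_right mult_suc
  not_less_zero less_suc

lemma arith_comprehension:
  assumes "\<And>i. E i \<in> sets M"
  shows "{a. sat M (e(v:=a)) E p} \<in> sets M"
proof -
  have "\<forall>p e E v. (\<forall>i. E i \<in> sets M) \<longrightarrow> {a. sat M (e(v := a)) E p} \<in> sets M"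
    using model unfolding ACA0_model_def by (elim conjE) assumption
  then show ?thesis using assms by blast
qed

lemma definable_set:
  assumes "\<And>i. E i \<in> sets M" "\<And>a. sat M (e(v:=a)) E p \<longleftrightarrow> P a"
  shows "{a. P a} \<in> sets M"
  using arith_comprehension[of E e v p, OF assms(1)] assms(2) by simp

lemma set_induct:
  assumes "X \<in> sets M" "\<zero> \<in> X" "\<And>n. n \<in> X \<Longrightarrow> n \<oplus> \<one> \<in> X"
  shows "n \<in> X"
proof -
  have "\<forall>X\<in>sets M. \<zero> \<in> X \<and> (\<forall>n. n \<in> X \<longrightarrow> n \<oplus> \<one> \<in> X) \<longrightarrow> (\<forall>n. n \<in> X)"
    using model unfolding ACA0_model_def by (elim conjE) assumption
  then show ?thesis using assms by blast
qed

text \<open>Every induction and comprehension below is along an explicitly written formula \<open>p\<close>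
  in the number variable 0, with further parameters supplied by \<open>e\<close> and \<open>E\<close>; the
  simplifier checks that \<open>p\<close> expresses the intended property.\<close>

lemma arith_induct:
  assumes "\<And>i. E i \<in> sets M" "\<And>a. sat M (e(v:=a)) E p \<longleftrightarrow> P a"
    and "P \<zero>" "\<And>n. P n \<Longrightarrow> P (n \<oplus> \<one>)"
  shows "\<forall>n. P n"
  using set_induct[OF definable_set[OF assms(1,2)]] assms(3,4) by auto

definition no_sets :: "nat \<Rightarrow> nat set" where "no_sets = (\<lambda>_. SOME S. S \<in> sets M)"

lemma no_sets[simp]: "no_sets i \<in> sets M"
  unfolding no_sets_def using sets_nonempty by (simp add: some_in_eq)

lemma arith_induct_nosets:
  assumes "\<And>a. sat M (e(0:=a)) no_sets p \<longleftrightarrow> P a"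
    and "P \<zero>" "\<And>n. P n \<Longrightarrow> P (n \<oplus> \<one>)"
  shows "\<forall>n. P n"
  by (rule arith_induct[OF no_sets assms])

lemma add_0_left[simp]: "\<zero> \<oplus> n = n"
proof -
  have "\<forall>n. \<zero> \<oplus> n = n"
    by (rule arith_induct_nosets[where e="\<lambda>_. 0" and
        p="Equ (Add Zero (Var 0)) (Var 0)"])
      (simp_all add: peano_axioms)
  then show ?thesis by blast
qed

lemma add_suc_left: "(m \<oplus> \<one>) \<oplus> n = (m \<oplus> n) \<oplus> \<one>"
proof -
  have "\<forall>n. (m \<oplus> \<one>) \<oplus> n = (m \<oplus> n) \<oplus> \<one>"
    by (rule arith_induct_nosets[where e="\<lambda>_. m" and
        p="Equ (Add (Add (Var 1) One) (Var 0)) (Add (Add (Var 1) (Var 0)) One)"])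
      (simp_all add: peano_axioms)
  then show ?thesis by blast
qed

lemma add_comm: "m \<oplus> n = n \<oplus> m"
proof -
  have "\<forall>n. m \<oplus> n = n \<oplus> m"
    by (rule arith_induct_nosets[where e="\<lambda>_. m" and
        p="Equ (Add (Var 1) (Var 0)) (Add (Var 0) (Var 1))"])
      (simp_all add: peano_axioms add_suc_left)
  then show ?thesis by blast
qed

lemma add_assoc: "(m \<oplus> n) \<oplus> k = m \<oplus> (n \<oplus> k)"
proof -
  have "\<forall>k. (m \<oplus> n) \<oplus> k = m \<oplus> (n \<oplus> k)"
    by (rule arith_induct_nosets[where e="\<lambda>i. if i = 1 then m else n" and
        p="Equ (Add (Add (Var 1) (Var 2)) (Var 0)) (Add (Var 1) (Add (Var 2) (Var 0)))"])
      (simp_all add: peano_axioms)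
  then show ?thesis by blast
qed

lemma add_left_comm: "m \<oplus> (n \<oplus> k) = n \<oplus> (m \<oplus> k)"
  by (metis add_assoc add_comm)

lemmas add_ac = add_assoc add_comm add_left_comm

lemma zero_or_suc: "n = \<zero> \<or> (\<exists>m. n = m \<oplus> \<one>)"
proof -
  have "\<forall>n. n = \<zero> \<or> (\<exists>m. n = m \<oplus> \<one>)"
    by (rule arith_induct_nosets[where e="\<lambda>_. 0" and
        p="Or (Equ (Var 0) Zero) (ExN 1 (Equ (Var 0) (Add (Var 1) One)))"])
      auto
  then show ?thesis by blast
qed

lemma mult_0_left[simp]: "\<zero> \<otimes> n = \<zero>"
proof -
  have "\<forall>n. \<zero> \<otimes> n = \<zero>"
    by (rule arith_induct_nosets[where e="\<lambda>_. 0" and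
        p="Equ (Mul Zero (Var 0)) Zero"])
      (simp_all add: peano_axioms)
  then show ?thesis by blast
qed

lemma mult_suc_left: "(m \<oplus> \<one>) \<otimes> n = m \<otimes> n \<oplus> n"
proof -
  have "\<forall>n. (m \<oplus> \<one>) \<otimes> n = m \<otimes> n \<oplus> n"
    by (rule arith_induct_nosets[where e="\<lambda>_. m" and
        p="Equ (Mul (Add (Var 1) One) (Var 0)) (Add (Mul (Var 1) (Var 0)) (Var 0))"])
      (simp_all add: add_0_right mult_0_right mult_suc add_ac)
  then show ?thesis by blast
qed

lemma mult_comm: "m \<otimes> n = n \<otimes> m"
proof -
  have "\<forall>n. m \<otimes> n = n \<otimes> m"
    by (rule arith_induct_nosets[where e="\<lambda>_. m" and
        p="Equ (Mul (Var 1) (Var 0)) (Mul (Var 0) (Var 1))"])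
      (simp_all add: add_0_right mult_0_right mult_suc mult_suc_left)
  then show ?thesis by blast
qed

lemma distrib_left: "m \<otimes> (n \<oplus> k) = m \<otimes> n \<oplus> m \<otimes> k"
proof -
  have "\<forall>k. m \<otimes> (n \<oplus> k) = m \<otimes> n \<oplus> m \<otimes> k"
  proof (rule arith_induct_nosets[where e="\<lambda>i. if i = 1 then m else n" and
      p="Equ (Mul (Var 1) (Add (Var 2) (Var 0))) (Add (Mul (Var 1) (Var 2)) (Mul (Var 1) (Var 0)))"])
    fix k assume IH: "m \<otimes> (n \<oplus> k) = m \<otimes> n \<oplus> m \<otimes> k"
    have "m \<otimes> (n \<oplus> (k \<oplus> \<one>)) = m \<otimes> ((n \<oplus> k) \<oplus> \<one>)" by (simp only: add_suc)
    also have "\<dots> = m \<otimes> (n \<oplus> k) \<oplus> m" by (simp only: mult_suc)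
    also have "\<dots> = m \<otimes> n \<oplus> (m \<otimes> k \<oplus> m)" by (simp only: IH add_assoc)
    also have "\<dots> = m \<otimes> n \<oplus> m \<otimes> (k \<oplus> \<one>)" by (simp only: mult_suc)
    finally show "m \<otimes> (n \<oplus> (k \<oplus> \<one>)) = m \<otimes> n \<oplus> m \<otimes> (k \<oplus> \<one>)" .
  qed simp_all
  then show ?thesis by blast
qed

lemma distrib_right: "(n \<oplus> k) \<otimes> m = n \<otimes> m \<oplus> k \<otimes> m"
  by (metis distrib_left mult_comm)

lemma mult_1_right[simp]: "m \<otimes> \<one> = m"
  using mult_suc[of m \<zero>] by simp

lemma mult_assoc: "(m \<otimes> n) \<otimes> k = m \<otimes> (n \<otimes> k)"
proof -
  have "\<forall>k. (m \<otimes> n) \<otimes> k = m \<otimes> (n \<otimes> k)"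
    by (rule arith_induct_nosets[where e="\<lambda>i. if i = 1 then m else n" and
        p="Equ (Mul (Mul (Var 1) (Var 2)) (Var 0)) (Mul (Var 1) (Mul (Var 2) (Var 0)))"])
      (simp_all add: mult_0_right mult_suc distrib_left)
  then show ?thesis by blast
qed

lemma mult_left_comm: "m \<otimes> (n \<otimes> k) = n \<otimes> (m \<otimes> k)"
  by (metis mult_assoc mult_comm)

lemmas mult_ac = mult_assoc mult_comm mult_left_comm

lemma mult_1_left[simp]: "\<one> \<otimes> m = m"
  using mult_1_right mult_comm by metis

lemma add_cancel: "m \<oplus> k = n \<oplus> k \<longleftrightarrow> m = n"
proof -
  have "\<forall>k. m \<oplus> k = n \<oplus> k \<longrightarrow> m = n"
    by (rule arith_induct_nosets[where e="\<lambda>i. if i = 1 then m else n" and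
        p="Imp (Equ (Add (Var 1) (Var 0)) (Add (Var 2) (Var 0))) (Equ (Var 1) (Var 2))"])
      (simp_all add: peano_axioms)
  then show ?thesis by blast
qed

lemma add_cancel_left: "k \<oplus> m = k \<oplus> n \<longleftrightarrow> m = n"
  using add_cancel add_comm by metis

lemma add_eq_self: "m \<oplus> k = m \<longleftrightarrow> k = \<zero>"
  using add_cancel_left[of m k \<zero>] by simp

lemma add_eq_zero[simp]: "m \<oplus> n = \<zero> \<longleftrightarrow> m = \<zero> \<and> n = \<zero>"
  using zero_or_suc[of n] suc_ne_zero by (auto simp: peano_axioms)

lemma zero_eq_add[simp]: "\<zero> = m \<oplus> n \<longleftrightarrow> m = \<zero> \<and> n = \<zero>"
  using add_eq_zero by metis

lemma less_iff: "m \<prec> n \<longleftrightarrow> (\<exists>k. n = m \<oplus> k \<oplus> \<one>)"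
proof -
  have 1: "\<forall>n. m \<prec> n \<longrightarrow> (\<exists>k. n = m \<oplus> k \<oplus> \<one>)"
  proof (rule arith_induct_nosets[where e="\<lambda>_. m" and
      p="Imp (Less (Var 1) (Var 0)) (ExN 2 (Equ (Var 0) (Add (Add (Var 1) (Var 2)) One)))"])
    fix n assume IH: "m \<prec> n \<longrightarrow> (\<exists>k. n = m \<oplus> k \<oplus> \<one>)"
    show "m \<prec> n \<oplus> \<one> \<longrightarrow> (\<exists>k. n \<oplus> \<one> = m \<oplus> k \<oplus> \<one>)"
    proof
      assume "m \<prec> n \<oplus> \<one>"
      then have "m \<prec> n \<or> m = n" by (simp add: peano_axioms)
      then show "\<exists>k. n \<oplus> \<one> = m \<oplus> k \<oplus> \<one>"
      proof
        assume "m \<prec> n" then obtain k where "n = m \<oplus> k \<oplus> \<one>" using IH by blast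
        then have "n \<oplus> \<one> = m \<oplus> (k \<oplus> \<one>) \<oplus> \<one>" by (simp add: peano_axioms)
        then show ?thesis by blast
      next
        assume "m = n" then show ?thesis by (intro exI[of _ \<zero>]) simp
      qed
    qed
  qed (simp_all add: peano_axioms)
  have 2: "\<forall>k. m \<prec> m \<oplus> k \<oplus> \<one>"
    by (rule arith_induct_nosets[where e="\<lambda>_. m" and
        p="Less (Var 1) (Add (Add (Var 1) (Var 0)) One)"])
      (simp_all add: peano_axioms)
  show ?thesis using 1 2 by blast
qed

lemma less_irrefl[simp]: "\<not> m \<prec> m"
proof
  assume "m \<prec> m"
  then obtain k where "m = m \<oplus> k \<oplus> \<one>" using less_iff by blast
  then have "m \<oplus> (k \<oplus> \<one>) = m" by (simp add: add_ac)
  then show False using add_eq_self suc_ne_zero by blast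
qed

lemma less_trans: "a \<prec> b \<Longrightarrow> b \<prec> c \<Longrightarrow> a \<prec> c"
proof -
  assume "a \<prec> b" "b \<prec> c"
  then obtain k l where "b = a \<oplus> k \<oplus> \<one>" "c = b \<oplus> l \<oplus> \<one>" using less_iff by blast
  then have "c = a \<oplus> (k \<oplus> \<one> \<oplus> l) \<oplus> \<one>" by (simp add: add_ac)
  then show "a \<prec> c" using less_iff by blast
qed

lemma less_suc_self: "m \<prec> m \<oplus> \<one>" by (simp add: peano_axioms)

lemma zero_less_suc: "\<zero> \<prec> m \<oplus> \<one>"
  using less_iff[of \<zero> "m \<oplus> \<one>"] by auto

lemma zero_le: "\<zero> \<prec> n \<or> \<zero> = n"
  using zero_or_suc[of n] zero_less_suc by auto

lemma less_linear: "m \<prec> n \<or> m = n \<or> n \<prec> m"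
proof -
  have "\<forall>n. m \<prec> n \<or> m = n \<or> n \<prec> m"
  proof (rule arith_induct_nosets[where e="\<lambda>_. m" and
      p="Or (Less (Var 1) (Var 0)) (Or (Equ (Var 1) (Var 0)) (Less (Var 0) (Var 1)))"])
    show "m \<prec> \<zero> \<or> m = \<zero> \<or> \<zero> \<prec> m" using zero_le[of m] by auto
  next
    fix n assume IH: "m \<prec> n \<or> m = n \<or> n \<prec> m"
    show "m \<prec> n \<oplus> \<one> \<or> m = n \<oplus> \<one> \<or> n \<oplus> \<one> \<prec> m"
    proof (cases "n \<prec> m")
      case True
      then obtain k where k: "m = n \<oplus> k \<oplus> \<one>" using less_iff by blast
      show ?thesis
      proof (cases "k = \<zero>")
        case True then show ?thesis using k by simp
      next
        case False
        then obtain j where "k = j \<oplus> \<one>" using zero_or_suc by blast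
        then have "m = (n \<oplus> \<one>) \<oplus> j \<oplus> \<one>" using k by (simp add: add_ac)
        then show ?thesis using less_iff by blast
      qed
    next
      case False then show ?thesis using IH by (simp add: peano_axioms)
    qed
  qed simp
  then show ?thesis by blast
qed

lemma less_asym: "a \<prec> b \<Longrightarrow> \<not> b \<prec> a"
  using less_trans less_irrefl by blast

lemma not_less: "\<not> a \<prec> b \<longleftrightarrow> b \<prec> a \<or> b = a"
  using less_linear less_asym by blast

lemma linorder_less: "class.linorder (\<lambda>x y. x \<prec> y \<or> x = y) (\<prec>)"
  by unfold_locales (use less_linear less_trans less_asym in blast)+

end

sublocale aca0 \<subseteq> L: linorder "\<lambda>x y. ls M x y \<or> x = y" "ls M"
  by (rule linorder_less)

context aca0
begin

lemma one_ne_zero[simp]: "\<one> \<noteq> \<zero>" "\<zero> \<noteq> \<one>" using suc_ne_zero[of \<zero>] by auto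

lemma le_iff: "m \<preceq> n \<longleftrightarrow> (\<exists>k. n = m \<oplus> k)"
proof
  assume "m \<preceq> n" then show "\<exists>k. n = m \<oplus> k"
  proof
    assume "m \<prec> n" then obtain k where "n = m \<oplus> k \<oplus> \<one>" using less_iff by blast
    then have "n = m \<oplus> (k \<oplus> \<one>)" by (simp add: add_assoc)
    then show ?thesis by blast
  next
    assume "m = n" then show ?thesis by (intro exI[of _ \<zero>]) simp
  qed
next
  assume "\<exists>k. n = m \<oplus> k"
  then obtain k where k: "n = m \<oplus> k" by blast
  show "m \<preceq> n"
  proof (cases "k = \<zero>")
    case False then obtain j where "k = j \<oplus> \<one>" using zero_or_suc by blast
    then have "n = m \<oplus> j \<oplus> \<one>" using k by (simp add: add_assoc)
    then show ?thesis using less_iff by blast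
  qed (use k in simp)
qed

lemma add_less_mono: "a \<prec> b \<Longrightarrow> a \<oplus> c \<prec> b \<oplus> c"
proof -
  assume "a \<prec> b" then obtain k where "b = a \<oplus> k \<oplus> \<one>" using less_iff by blast
  then have "b \<oplus> c = (a \<oplus> c) \<oplus> k \<oplus> \<one>" by (simp add: add_ac)
  then show ?thesis using less_iff by blast
qed

lemma add_less_iff: "a \<oplus> c \<prec> b \<oplus> c \<longleftrightarrow> a \<prec> b"
proof
  assume h: "a \<oplus> c \<prec> b \<oplus> c"
  show "a \<prec> b"
  proof (rule ccontr)
    assume "\<not> a \<prec> b" then have "b \<prec> a \<or> b = a" using not_less by blast
    then have "b \<oplus> c \<prec> a \<oplus> c \<or> b \<oplus> c = a \<oplus> c" using add_less_mono by blast
    then show False using h less_asym by auto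
  qed
qed (rule add_less_mono)

lemma add_less_iff_left: "c \<oplus> a \<prec> c \<oplus> b \<longleftrightarrow> a \<prec> b"
  using add_less_iff[of a c b] by (simp add: add_comm)

lemma le_add: "a \<preceq> a \<oplus> b"
  using le_iff by blast

lemma le_add2: "a \<preceq> b \<oplus> a"
  using le_iff[of a "b \<oplus> a"] add_comm[of b a] by blast

lemma suc_le_iff: "a \<oplus> \<one> \<preceq> b \<longleftrightarrow> a \<prec> b"
proof
  assume "a \<oplus> \<one> \<preceq> b" then obtain k where "b = a \<oplus> \<one> \<oplus> k" using le_iff by blast
  then have "b = a \<oplus> k \<oplus> \<one>" by (simp add: add_ac)
  then show "a \<prec> b" using less_iff by blast
next
  assume "a \<prec> b" then obtain k where "b = a \<oplus> k \<oplus> \<one>" using less_iff by blast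
  then have "b = a \<oplus> \<one> \<oplus> k" by (simp add: add_ac)
  then show "a \<oplus> \<one> \<preceq> b" using le_iff by blast
qed

lemma zero_less_iff: "\<zero> \<prec> a \<longleftrightarrow> a \<noteq> \<zero>"
  using zero_le[of a] by auto

lemma le_zero_iff: "a \<preceq> \<zero> \<longleftrightarrow> a = \<zero>"
  using not_less_zero by auto

lemma mult_less_mono: "a \<prec> b \<Longrightarrow> \<zero> \<prec> c \<Longrightarrow> a \<otimes> c \<prec> b \<otimes> c"
proof -
  assume "a \<prec> b" "\<zero> \<prec> c"
  then obtain j c' where j: "b = a \<oplus> j \<oplus> \<one>" and c: "c = c' \<oplus> \<one>"
    using less_iff zero_less_iff zero_or_suc by blast
  have "b \<otimes> c = a \<otimes> c \<oplus> (j \<otimes> c \<oplus> c') \<oplus> \<one>"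
    using j c by (simp add: distrib_right mult_suc_left mult_suc add_ac)
  then show ?thesis using less_iff by blast
qed

lemma mult_less_mono_left: "a \<prec> b \<Longrightarrow> \<zero> \<prec> c \<Longrightarrow> c \<otimes> a \<prec> c \<otimes> b"
  using mult_less_mono mult_comm by metis

lemma mult_le_mono: "a \<preceq> b \<Longrightarrow> a \<otimes> c \<preceq> b \<otimes> c"
  using mult_less_mono[of a b c] zero_le[of c] by auto

lemma mult_le_mono_left: "a \<preceq> b \<Longrightarrow> c \<otimes> a \<preceq> c \<otimes> b"
  using mult_le_mono mult_comm by metis

lemma zero_less_one[simp]: "\<zero> \<prec> \<one>" using zero_less_suc[of \<zero>] by simp

lemma pr_eq: "pr M i j = (i \<oplus> j) \<otimes> (i \<oplus> j) \<oplus> i" by (simp add: pr_def)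

lemma sq_gap: "i \<preceq> s \<Longrightarrow> s \<prec> s' \<Longrightarrow> s \<otimes> s \<oplus> i \<prec> s' \<otimes> s'"
proof -
  assume i: "i \<preceq> s" and s: "s \<prec> s'"
  have 1: "s \<oplus> \<one> \<preceq> s'" using s suc_le_iff by blast
  have a: "(s \<oplus> \<one>) \<otimes> (s \<oplus> \<one>) \<preceq> s' \<otimes> (s \<oplus> \<one>)" using mult_le_mono[OF 1] .
  have b: "s' \<otimes> (s \<oplus> \<one>) \<preceq> s' \<otimes> s'" using mult_le_mono_left[OF 1] .
  have 2: "(s \<oplus> \<one>) \<otimes> (s \<oplus> \<one>) \<preceq> s' \<otimes> s'" using a b L.order_trans by blast
  have 3: "(s \<oplus> \<one>) \<otimes> (s \<oplus> \<one>) = s \<otimes> s \<oplus> (s \<oplus> s \<oplus> \<one>)"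
    by (simp add: mult_suc mult_suc_left add_ac)
  have "i \<preceq> s \<oplus> s" using i le_add[of s s] L.order_trans by blast
  then have "i \<prec> s \<oplus> s \<oplus> \<one>" using less_suc by blast
  then have "s \<otimes> s \<oplus> i \<prec> s \<otimes> s \<oplus> (s \<oplus> s \<oplus> \<one>)" using add_less_iff_left by blast
  then have "s \<otimes> s \<oplus> i \<prec> (s \<oplus> \<one>) \<otimes> (s \<oplus> \<one>)" using 3 by simp
  then show ?thesis using 2 L.less_le_trans by blast
qed

lemma pr_inj: "pr M i j = pr M i' j' \<Longrightarrow> i = i' \<and> j = j'"
proof -
  assume h: "pr M i j = pr M i' j'"
  have key: "s \<otimes> s \<oplus> i \<noteq> s' \<otimes> s' \<oplus> i'" if "i \<preceq> s" "s \<prec> s'" for s s' i i'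
  proof -
    have "s \<otimes> s \<oplus> i \<prec> s' \<otimes> s'" using sq_gap that by blast
    moreover have "s' \<otimes> s' \<preceq> s' \<otimes> s' \<oplus> i'" by (rule le_add)
    ultimately have "s \<otimes> s \<oplus> i \<prec> s' \<otimes> s' \<oplus> i'" using L.less_le_trans by blast
    then show ?thesis by auto
  qed
  have h2: "(i \<oplus> j) \<otimes> (i \<oplus> j) \<oplus> i = (i' \<oplus> j') \<otimes> (i' \<oplus> j') \<oplus> i'" using h by (simp only: pr_eq)
  have "\<not> (i \<oplus> j) \<prec> (i' \<oplus> j')" using key[of i "i \<oplus> j" "i' \<oplus> j'" i'] h2 le_add by blast
  moreover have "\<not> (i' \<oplus> j') \<prec> (i \<oplus> j)" using key[of i' "i' \<oplus> j'" "i \<oplus> j" i] h2 le_add by metis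
  ultimately have s: "i \<oplus> j = i' \<oplus> j'" using less_linear by blast
  then have "i = i'" using h2 add_cancel_left by metis
  then show ?thesis using s add_cancel_left by metis
qed

lemma pr_inj_iff[simp]: "pr M i j = pr M i' j' \<longleftrightarrow> i = i' \<and> j = j'"
  using pr_inj by blast

lemma pr_mono_left: "i \<prec> i' \<Longrightarrow> pr M i j \<prec> pr M i' j"
proof -
  assume h: "i \<prec> i'"
  then have s: "i \<oplus> j \<preceq> i' \<oplus> j" using add_less_mono by blast
  have a: "(i \<oplus> j) \<otimes> (i \<oplus> j) \<preceq> (i' \<oplus> j) \<otimes> (i \<oplus> j)" by (rule mult_le_mono[OF s])
  have b: "(i' \<oplus> j) \<otimes> (i \<oplus> j) \<preceq> (i' \<oplus> j) \<otimes> (i' \<oplus> j)" by (rule mult_le_mono_left[OF s])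
  have c: "(i \<oplus> j) \<otimes> (i \<oplus> j) \<preceq> (i' \<oplus> j) \<otimes> (i' \<oplus> j)" using L.order_trans[OF a b] .
  have d: "(i \<oplus> j) \<otimes> (i \<oplus> j) \<oplus> i \<prec> (i \<oplus> j) \<otimes> (i \<oplus> j) \<oplus> i'" using h add_less_iff_left by blast
  have e: "(i \<oplus> j) \<otimes> (i \<oplus> j) \<oplus> i' \<preceq> (i' \<oplus> j) \<otimes> (i' \<oplus> j) \<oplus> i'"
    using c add_less_mono[of "(i \<oplus> j) \<otimes> (i \<oplus> j)" "(i' \<oplus> j) \<otimes> (i' \<oplus> j)" i'] by auto
  have "(i \<oplus> j) \<otimes> (i \<oplus> j) \<oplus> i \<prec> (i' \<oplus> j) \<otimes> (i' \<oplus> j) \<oplus> i'" using L.less_le_trans[OF d e] .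
  then show ?thesis by (simp only: pr_eq)
qed

lemma least_element:
  assumes S: "S \<in> sets M" and x: "x \<in> S"
  shows "\<exists>m\<in>S. \<forall>y\<in>S. m \<preceq> y"
proof (rule ccontr)
  assume no: "\<not> (\<exists>m\<in>S. \<forall>y\<in>S. m \<preceq> y)"
  have "\<forall>n. \<forall>m. m \<preceq> n \<longrightarrow> m \<notin> S"
  proof (rule arith_induct[where E="\<lambda>_. S" and e="\<lambda>_. 0" and v=0 and
      p="AllN 1 (Imp (Leq (Var 1) (Var 0)) (Neg (In (Var 1) 0)))"])
    show "\<forall>m. m \<preceq> \<zero> \<longrightarrow> m \<notin> S"
    proof (intro allI impI)
      fix m assume "m \<preceq> \<zero>"
      then have "m = \<zero>" using le_zero_iff by blast
      then show "m \<notin> S" using no zero_le by blast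
    qed
  next
    fix n assume IH: "\<forall>m. m \<preceq> n \<longrightarrow> m \<notin> S"
    show "\<forall>m. m \<preceq> n \<oplus> \<one> \<longrightarrow> m \<notin> S"
    proof (intro allI impI)
      fix m assume m: "m \<preceq> n \<oplus> \<one>"
      show "m \<notin> S"
      proof
        assume mS: "m \<in> S"
        then have "m = n \<oplus> \<one>" using m IH less_suc by blast
        moreover have "\<forall>y\<in>S. m \<preceq> y"
        proof
          fix y assume "y \<in> S"
          then have "\<not> y \<preceq> n" using IH by blast
          then show "m \<preceq> y" using \<open>m = n \<oplus> \<one>\<close> not_less less_suc by (metis suc_le_iff)
        qed
        ultimately show False using no mS by blast
      qed
    qed
  qed (use S in simp_all)
  then show False using x by blast
qed

lemma least_number:
  assumes "\<And>i. E i \<in> sets M" "\<And>a. sat M (e(v:=a)) E p \<longleftrightarrow> P a" "P x"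
  shows "\<exists>m. P m \<and> (\<forall>y. P y \<longrightarrow> m \<preceq> y)"
  using least_element[OF definable_set[OF assms(1,2)], of x] assms(3) by auto

section \<open>Divisibility and the coding of finite sequences\<close>

definition dvdM :: "nat \<Rightarrow> nat \<Rightarrow> bool" where "dvdM a b \<longleftrightarrow> (\<exists>k. b = a \<otimes> k)"

lemma dvd_refl[simp]: "dvdM a a" unfolding dvdM_def by (metis mult_1_right)
lemma dvd_zero[simp]: "dvdM a \<zero>" unfolding dvdM_def by (metis mult_0_right)
lemma one_dvd[simp]: "dvdM \<one> a" unfolding dvdM_def by (metis mult_1_left)
lemma dvd_mult: "dvdM a b \<Longrightarrow> dvdM a (b \<otimes> c)" unfolding dvdM_def by (metis mult_assoc)
lemma dvd_mult2: "dvdM a b \<Longrightarrow> dvdM a (c \<otimes> b)" using dvd_mult mult_comm by metis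
lemma dvd_trans: "dvdM a b \<Longrightarrow> dvdM b c \<Longrightarrow> dvdM a c" unfolding dvdM_def by (metis mult_assoc)

lemma dvd_add_cancel: "dvdM m (x \<oplus> y) \<Longrightarrow> dvdM m x \<Longrightarrow> dvdM m y"
proof -
  assume "dvdM m (x \<oplus> y)" "dvdM m x"
  then obtain u w where u: "x = m \<otimes> u" and w: "x \<oplus> y = m \<otimes> w" unfolding dvdM_def by blast
  show "dvdM m y"
  proof (cases "m = \<zero>")
    case True then show ?thesis using u w by simp
  next
    case False
    then have m: "\<zero> \<prec> m" using zero_less_iff by blast
    have "u \<preceq> w"
    proof (rule ccontr)
      assume "\<not> u \<preceq> w"
      then have "w \<prec> u" using not_less by blast
      then have "m \<otimes> w \<prec> m \<otimes> u" using mult_less_mono_left m by blast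
      moreover have "m \<otimes> u \<preceq> m \<otimes> w" using u w le_add by metis
      ultimately show False using L.less_le_not_le by blast
    qed
    then obtain t where "w = u \<oplus> t" using le_iff by blast
    then have "m \<otimes> u \<oplus> y = m \<otimes> u \<oplus> m \<otimes> t" using u w by (simp add: distrib_left)
    then have "y = m \<otimes> t" using add_cancel_left by blast
    then show ?thesis unfolding dvdM_def by blast
  qed
qed

lemma dvd_one: "dvdM q \<one> \<Longrightarrow> q = \<one>"
proof -
  assume "dvdM q \<one>"
  then obtain k where k: "\<one> = q \<otimes> k" unfolding dvdM_def by blast
  then have "k \<noteq> \<zero>" by (metis mult_0_right one_ne_zero)
  then have "\<one> \<preceq> k" using zero_less_iff suc_le_iff[of \<zero> k] by simp
  then have "q \<otimes> \<one> \<preceq> q \<otimes> k" by (rule mult_le_mono_left)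
  then have "q \<preceq> \<one>" using k[symmetric] by simp
  moreover have "q \<noteq> \<zero>" using k by (metis mult_0_left one_ne_zero)
  ultimately show "q = \<one>" using less_suc[of q \<zero>] le_zero_iff by (metis add_0_left)
qed

lemma not_dvd_one: "\<one> \<prec> m \<Longrightarrow> \<not> dvdM m \<one>"
  using dvd_one by blast

lemma division: "\<zero> \<prec> s \<Longrightarrow> \<exists>q r. x = s \<otimes> q \<oplus> r \<and> r \<prec> s"
proof -
  assume s: "\<zero> \<prec> s"
  have "\<forall>x. \<exists>q r. x = s \<otimes> q \<oplus> r \<and> r \<prec> s"
  proof (rule arith_induct_nosets[where e="\<lambda>_. s" and
      p="ExN 2 (ExN 3 (Conj (Equ (Var 0) (Add (Mul (Var 1) (Var 2)) (Var 3))) (Less (Var 3) (Var 1))))"])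
    show "\<exists>q r. \<zero> = s \<otimes> q \<oplus> r \<and> r \<prec> s" using s by (intro exI[of _ \<zero>]) simp
  next
    fix x assume "\<exists>q r. x = s \<otimes> q \<oplus> r \<and> r \<prec> s"
    then obtain q r where qr: "x = s \<otimes> q \<oplus> r" "r \<prec> s" by blast
    show "\<exists>q r. x \<oplus> \<one> = s \<otimes> q \<oplus> r \<and> r \<prec> s"
    proof (cases "r \<oplus> \<one> = s")
      case True
      have "x \<oplus> \<one> = s \<otimes> q \<oplus> (r \<oplus> \<one>)" using qr by (simp add: add_assoc)
      also have "\<dots> = s \<otimes> (q \<oplus> \<one>)" using True by (simp add: mult_suc)
      finally have "x \<oplus> \<one> = s \<otimes> (q \<oplus> \<one>) \<oplus> \<zero>" by simp
      then show ?thesis using s by blast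
    next
      case False
      then have "r \<oplus> \<one> \<prec> s" using qr(2) suc_le_iff by blast
      moreover have "x \<oplus> \<one> = s \<otimes> q \<oplus> (r \<oplus> \<one>)" using qr by (simp add: add_ac)
      ultimately show ?thesis by blast
    qed
  qed simp
  then show ?thesis by blast
qed

definition coprimeM :: "nat \<Rightarrow> nat \<Rightarrow> bool" where
  "coprimeM m a \<longleftrightarrow> (\<forall>q. dvdM q m \<and> dvdM q a \<longrightarrow> q = \<one>)"

lemma coprimeM_dvd_mult:
  assumes m: "\<zero> \<prec> m" and h: "dvdM m (a \<otimes> b)" and c: "coprimeM m a"
  shows "dvdM m b"
proof (cases "a = \<zero>")
  case True
  then have "m = \<one>" using c unfolding coprimeM_def by simp
  then show ?thesis by simp
next
  case False
  let ?P = "\<lambda>x. \<zero> \<prec> x \<and> dvdM m (x \<otimes> b)"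
  have "\<exists>s. ?P s \<and> (\<forall>y. ?P y \<longrightarrow> s \<preceq> y)"
    by (rule least_number[where E=no_sets and e="\<lambda>i. if i = 1 then m else b" and v=0 and
          p="Conj (Less Zero (Var 0)) (ExN 3 (Equ (Mul (Var 0) (Var 2)) (Mul (Var 1) (Var 3))))" and x=m])
       (use m in \<open>auto simp: dvdM_def\<close>)
  then obtain s where s: "?P s" and smin: "\<And>y. ?P y \<Longrightarrow> s \<preceq> y" by blast
  have sd: "dvdM s x" if x: "?P x" for x
  proof -
    obtain q r where qr: "x = s \<otimes> q \<oplus> r" "r \<prec> s" using division s by blast
    have "x \<otimes> b = (s \<otimes> b) \<otimes> q \<oplus> r \<otimes> b" using qr by (simp add: distrib_right distrib_left mult_ac)
    then have "dvdM m ((s \<otimes> b) \<otimes> q \<oplus> r \<otimes> b)" using x by simp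
    moreover have "dvdM m ((s \<otimes> b) \<otimes> q)" using s dvd_mult by blast
    ultimately have "dvdM m (r \<otimes> b)" using dvd_add_cancel by blast
    then have "r = \<zero>" using smin[of r] qr(2) zero_less_iff L.less_le_not_le by blast
    then have "x = s \<otimes> q" using qr by simp
    then show ?thesis unfolding dvdM_def by blast
  qed
  have "dvdM s m" using sd[of m] m dvd_mult[OF dvd_refl, of m b] by blast
  moreover have "dvdM s a" using sd[of a] False h zero_less_iff by blast
  ultimately have "s = \<one>" using c unfolding coprimeM_def by blast
  then show ?thesis using s by simp
qed

lemma common_multiple_exists: "\<exists>d. \<zero> \<prec> d \<and> (\<forall>k. \<zero> \<prec> k \<and> k \<preceq> N \<longrightarrow> dvdM k d)"
proof -
  have "\<forall>N. \<exists>d. \<zero> \<prec> d \<and> (\<forall>k. \<zero> \<prec> k \<and> k \<preceq> N \<longrightarrow> dvdM k d)"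
  proof (rule arith_induct_nosets[where e="\<lambda>_. 0" and
      p="ExN 1 (Conj (Less Zero (Var 1)) (AllN 2 (Imp (Conj (Less Zero (Var 2)) (Leq (Var 2) (Var 0))) (ExN 3 (Equ (Var 1) (Mul (Var 2) (Var 3)))))))"])
    show "\<exists>d. \<zero> \<prec> d \<and> (\<forall>k. \<zero> \<prec> k \<and> k \<preceq> \<zero> \<longrightarrow> dvdM k d)"
      using le_zero_iff by (intro exI[of _ \<one>]) auto
  next
    fix N assume "\<exists>d. \<zero> \<prec> d \<and> (\<forall>k. \<zero> \<prec> k \<and> k \<preceq> N \<longrightarrow> dvdM k d)"
    then obtain d where d: "\<zero> \<prec> d" "\<And>k. \<zero> \<prec> k \<and> k \<preceq> N \<Longrightarrow> dvdM k d" by blast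
    have "\<zero> \<prec> d \<otimes> (N \<oplus> \<one>)" using d(1) mult_less_mono[of \<zero> d "N \<oplus> \<one>"] zero_less_suc by simp
    moreover have "dvdM k (d \<otimes> (N \<oplus> \<one>))" if "\<zero> \<prec> k" "k \<preceq> N \<oplus> \<one>" for k
    proof (cases "k = N \<oplus> \<one>")
      case True then show ?thesis by (simp add: dvd_mult2)
    next
      case False then have "k \<preceq> N" using that less_suc by blast
      then show ?thesis using d(2) that dvd_mult by blast
    qed
    ultimately show "\<exists>d. \<zero> \<prec> d \<and> (\<forall>k. \<zero> \<prec> k \<and> k \<preceq> N \<oplus> \<one> \<longrightarrow> dvdM k d)" by blast
  qed (auto simp: dvdM_def)
  then show ?thesis by blast
qed

definition modulus :: "nat \<Rightarrow> nat \<Rightarrow> nat" where "modulus d z = \<one> \<oplus> (z \<oplus> \<one>) \<otimes> d"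

lemma modulus_gt1: "\<zero> \<prec> d \<Longrightarrow> \<one> \<prec> modulus d z"
proof -
  assume "\<zero> \<prec> d"
  then have "\<zero> \<prec> (z \<oplus> \<one>) \<otimes> d" using mult_less_mono[of \<zero> "z \<oplus> \<one>" d] zero_less_suc by simp
  then show ?thesis unfolding modulus_def using add_less_iff_left[of \<one> \<zero>] by simp
qed

lemma coprimeM_sym: "coprimeM a b \<Longrightarrow> coprimeM b a" unfolding coprimeM_def by blast

lemma coprime_modulus:
  assumes d: "\<zero> \<prec> d" "\<And>k. \<zero> \<prec> k \<and> k \<preceq> N \<Longrightarrow> dvdM k d"
    and zz: "z \<prec> z'" "z' \<prec> N"
  shows "coprimeM (modulus d z) (modulus d z')"
  unfolding coprimeM_def
proof (intro allI impI)
  fix q assume q: "dvdM q (modulus d z) \<and> dvdM q (modulus d z')"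
  obtain D where D: "z' = z \<oplus> D \<oplus> \<one>" using zz less_iff by blast
  have id: "(z' \<oplus> \<one>) \<otimes> modulus d z = (z \<oplus> \<one>) \<otimes> modulus d z' \<oplus> (D \<oplus> \<one>)"
    unfolding modulus_def D by (simp add: distrib_left distrib_right mult_suc_left mult_suc add_ac mult_ac)
  have "dvdM q ((z \<oplus> \<one>) \<otimes> modulus d z' \<oplus> (D \<oplus> \<one>))" using q id dvd_mult2 by metis
  then have qD: "dvdM q (D \<oplus> \<one>)" using q dvd_add_cancel dvd_mult2 by blast
  have "D \<oplus> \<one> \<preceq> z'" using D le_add2[of "D \<oplus> \<one>" z] by (simp add: add_ac)
  then have "D \<oplus> \<one> \<preceq> N" using zz(2) L.le_less_trans by blast
  then have "dvdM (D \<oplus> \<one>) d" using d(2) zero_less_suc by blast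
  then have "dvdM q ((z \<oplus> \<one>) \<otimes> d)" using qD dvd_trans dvd_mult2 by blast
  moreover have "dvdM q (\<one> \<oplus> (z \<oplus> \<one>) \<otimes> d)" using q unfolding modulus_def by blast
  ultimately have "dvdM q \<one>" using dvd_add_cancel[of q "(z \<oplus> \<one>) \<otimes> d" \<one>] by (simp add: add_comm)
  then show "q = \<one>" by (rule dvd_one)
qed

end

definition ModT :: "trm \<Rightarrow> trm \<Rightarrow> trm" where "ModT d z = Add One (Mul (Add z One) d)"
definition CodeT :: "trm \<Rightarrow> trm \<Rightarrow> trm \<Rightarrow> trm \<Rightarrow> trm" where
  "CodeT n N d s = PairT n (PairT N (PairT d s))"

text \<open>Formula builders with a base index \<open>b\<close> bind only variables above \<open>b\<close>, so their term
  arguments must be \<open>below (b+1)\<close> to avoid capture.\<close>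

definition below :: "nat \<Rightarrow> trm \<Rightarrow> bool" where "below b t \<longleftrightarrow> (\<forall>w\<in>tvars t. w < b)"

lemma tvars_ModT[simp]: "tvars (ModT d z) = tvars d \<union> tvars z" by (auto simp: ModT_def)
lemma tvars_CodeT[simp]: "tvars (CodeT n N d s) = tvars n \<union> tvars N \<union> tvars d \<union> tvars s"
  by (auto simp: CodeT_def)

lemma below_simps[simp]:
  "below b (Var v) \<longleftrightarrow> v < b" "below b Zero" "below b One"
  "below b (Add s t) \<longleftrightarrow> below b s \<and> below b t" "below b (Mul s t) \<longleftrightarrow> below b s \<and> below b t"
  "below b (PairT s t) \<longleftrightarrow> below b s \<and> below b t"
  by (auto simp: below_def)

lemma below_notin: "below b t \<Longrightarrow> b \<le> v \<Longrightarrow> v \<notin> tvars t"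
  by (auto simp: below_def)

lemma below_mono: "below b t \<Longrightarrow> b \<le> b' \<Longrightarrow> below b' t"
  by (auto simp: below_def)

definition entryF :: "nat \<Rightarrow> trm \<Rightarrow> trm \<Rightarrow> trm \<Rightarrow> afm" where
  "entryF b tc ti ty = ExN (b+1) (ExN (b+2) (ExN (b+3) (ExN (b+4)
     (Conj (Equ tc (CodeT (Var (b+1)) (Var (b+2)) (Var (b+3)) (Var (b+4))))
     (Conj (Less ti (Var (b+1))) (Conj (Less (PairT ti ty) (Var (b+2)))
       (ExN (b+5) (Equ (Var (b+4)) (Mul (ModT (Var (b+3)) (PairT ti ty)) (Var (b+5)))))))))))"

definition lenF :: "nat \<Rightarrow> trm \<Rightarrow> trm \<Rightarrow> afm" where
  "lenF b tc tn = ExN (b+1) (ExN (b+2) (ExN (b+3)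
     (Equ tc (CodeT tn (Var (b+1)) (Var (b+2)) (Var (b+3))))))"

context aca0
begin

lemma ev_ModT[simp]: "ev M e (ModT d z) = \<one> \<oplus> (ev M e z \<oplus> \<one>) \<otimes> ev M e d" by (simp add: ModT_def)

text \<open>The code \<open>\<langle>n, N, d, s\<rangle>\<close> represents the sequence of length \<open>n\<close> whose graph is
  the set of pairs \<open>\<langle>i, y\<rangle> < N\<close> for which the modulus \<open>1 + (\<langle>i, y\<rangle> + 1) d\<close>
  divides \<open>s\<close> (Goedel's \<open>\<beta>\<close>-function: if every positive \<open>k \<le> N\<close> divides \<open>d\<close>,
  the moduli of distinct numbers below \<open>N\<close> are coprime, so \<open>s\<close> can be chosen by the
  Chinese remainder theorem).\<close>

definition code :: "nat \<Rightarrow> nat \<Rightarrow> nat \<Rightarrow> nat \<Rightarrow> nat" where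
  "code n N d s = pr M n (pr M N (pr M d s))"

lemma ev_CodeT[simp]: "ev M e (CodeT n N d s) = code (ev M e n) (ev M e N) (ev M e d) (ev M e s)"
  by (simp add: CodeT_def code_def)

lemma code_inj[simp]: "code n N d s = code n' N' d' s' \<longleftrightarrow> n = n' \<and> N = N' \<and> d = d' \<and> s = s'"
  by (simp add: code_def)

definition entry :: "nat \<Rightarrow> nat \<Rightarrow> nat \<Rightarrow> bool" where
  "entry c i y \<longleftrightarrow> (\<exists>n N d s. c = code n N d s \<and> i \<prec> n \<and> pr M i y \<prec> N \<and> dvdM (modulus d (pr M i y)) s)"

definition len :: "nat \<Rightarrow> nat \<Rightarrow> bool" where
  "len c n \<longleftrightarrow> (\<exists>N d s. c = code n N d s)"

lemma sat_entryF[simp]: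
  assumes "below b tc" "below b ti" "below b ty"
  shows "sat M e E (entryF b tc ti ty) \<longleftrightarrow> entry (ev M e tc) (ev M e ti) (ev M e ty)"
proof -
  have [simp]: "\<And>v. b \<le> v \<Longrightarrow> v \<notin> tvars tc" "\<And>v. b \<le> v \<Longrightarrow> v \<notin> tvars ti" "\<And>v. b \<le> v \<Longrightarrow> v \<notin> tvars ty"
    using assms below_notin by blast+
  show ?thesis by (simp add: entryF_def entry_def dvdM_def modulus_def)
qed

lemma sat_lenF[simp]:
  assumes "below b tc" "below b tn"
  shows "sat M e E (lenF b tc tn) \<longleftrightarrow> len (ev M e tc) (ev M e tn)"
proof -
  have [simp]: "\<And>v. b \<le> v \<Longrightarrow> v \<notin> tvars tc" "\<And>v. b \<le> v \<Longrightarrow> v \<notin> tvars tn"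
    using assms below_notin by blast+
  show ?thesis by (simp add: lenF_def len_def)
qed

lemma entry_code: "entry (code n N d s) i y \<longleftrightarrow> i \<prec> n \<and> pr M i y \<prec> N \<and> dvdM (modulus d (pr M i y)) s"
  by (simp add: entry_def)

lemma len_unique: "len c n \<Longrightarrow> len c n' \<Longrightarrow> n = n'"
  by (auto simp: len_def)

lemma entry_has_len: "entry c i y \<Longrightarrow> \<exists>n. len c n \<and> i \<prec> n"
  by (auto simp: entry_def len_def)

lemma entry_less_len: "entry c i y \<Longrightarrow> len c n \<Longrightarrow> i \<prec> n"
  using entry_has_len len_unique by blast

lemma coprime_modulus_ne:
  assumes d: "\<zero> \<prec> d" "\<And>k. \<zero> \<prec> k \<and> k \<preceq> N \<Longrightarrow> dvdM k d"
    and zz: "z \<prec> N" "z' \<prec> N" "z \<noteq> z'"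
  shows "coprimeM (modulus d z) (modulus d z')"
  using coprime_modulus[OF d, where z=z and z'=z'] coprime_modulus[OF d, where z=z' and z'=z]
    coprimeM_sym zz less_linear by blast

lemma dvd_mult_modulus_iff:
  assumes d: "\<zero> \<prec> d" "\<And>k. \<zero> \<prec> k \<and> k \<preceq> N \<Longrightarrow> dvdM k d"
    and zn: "z \<prec> N" "n \<prec> N"
  shows "dvdM (modulus d z) (s \<otimes> modulus d n) \<longleftrightarrow> z = n \<or> dvdM (modulus d z) s"
proof (cases "z = n")
  case False
  have "dvdM (modulus d z) (modulus d n \<otimes> s) \<Longrightarrow> dvdM (modulus d z) s"
    using coprimeM_dvd_mult coprime_modulus_ne[OF d zn False] modulus_gt1[OF d(1)] less_trans
      zero_less_one by blast
  then show ?thesis using False dvd_mult by (auto simp: mult_comm)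
qed (simp add: dvd_mult2)

lemma set_code_exists:
  assumes d: "\<zero> \<prec> d" "\<And>k. \<zero> \<prec> k \<and> k \<preceq> N \<Longrightarrow> dvdM k d" and Y: "Y \<in> sets M"
  shows "\<exists>s. \<forall>z. z \<prec> N \<longrightarrow> (dvdM (modulus d z) s \<longleftrightarrow> z \<in> Y)"
proof -
  have "\<forall>n. \<exists>s. \<forall>z. z \<prec> N \<longrightarrow> (dvdM (modulus d z) s \<longleftrightarrow> z \<in> Y \<and> z \<prec> n)"
  proof (rule arith_induct[where E="\<lambda>_. Y" and e="\<lambda>i. if i = 1 then N else d" and v=0 and
        p="ExN 5 (AllN 6 (Imp (Less (Var 6) (Var 1)) (Iff (ExN 7 (Equ (Var 5) (Mul (ModT (Var 2) (Var 6)) (Var 7)))) (Conj (In (Var 6) 0) (Less (Var 6) (Var 0))))))"])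
    show "\<exists>s. \<forall>z. z \<prec> N \<longrightarrow> (dvdM (modulus d z) s \<longleftrightarrow> z \<in> Y \<and> z \<prec> \<zero>)"
      using not_dvd_one modulus_gt1[OF d(1)] by (intro exI[of _ \<one>]) auto
  next
    fix n assume "\<exists>s. \<forall>z. z \<prec> N \<longrightarrow> (dvdM (modulus d z) s \<longleftrightarrow> z \<in> Y \<and> z \<prec> n)"
    then obtain s where s: "\<And>z. z \<prec> N \<Longrightarrow> (dvdM (modulus d z) s \<longleftrightarrow> z \<in> Y \<and> z \<prec> n)" by blast
    show "\<exists>s. \<forall>z. z \<prec> N \<longrightarrow> (dvdM (modulus d z) s \<longleftrightarrow> z \<in> Y \<and> z \<prec> n \<oplus> \<one>)"
    proof (cases "n \<in> Y \<and> n \<prec> N")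
      case True
      then show ?thesis
        using s dvd_mult_modulus_iff[OF d _ conjunct2[OF True], of _ s]
        by (intro exI[of _ "s \<otimes> modulus d n"]) (auto simp: less_suc)
    next
      case False
      then show ?thesis using s by (intro exI[of _ s]) (auto simp: less_suc)
    qed
  qed (use Y in \<open>auto simp: dvdM_def modulus_def\<close>)
  then show ?thesis by blast
qed

lemma functional_graph_bounded:
  assumes Y: "Y \<in> sets M" and fn: "\<And>i. i \<prec> n \<Longrightarrow> \<exists>!y. pr M i y \<in> Y"
  shows "\<exists>B. \<forall>i y. i \<prec> n \<and> pr M i y \<in> Y \<longrightarrow> pr M i y \<prec> B"
proof -
  have "\<forall>m. m \<preceq> n \<longrightarrow> (\<exists>B. \<forall>i y. i \<prec> m \<and> pr M i y \<in> Y \<longrightarrow> pr M i y \<prec> B)"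
  proof (rule arith_induct[where E="\<lambda>_. Y" and e="\<lambda>_. n" and v=0 and
        p="Imp (Leq (Var 0) (Var 1)) (ExN 2 (AllN 3 (AllN 4 (Imp (Conj (Less (Var 3) (Var 0)) (In (PairT (Var 3) (Var 4)) 0)) (Less (PairT (Var 3) (Var 4)) (Var 2))))))"])
    fix m assume IH: "m \<preceq> n \<longrightarrow> (\<exists>B. \<forall>i y. i \<prec> m \<and> pr M i y \<in> Y \<longrightarrow> pr M i y \<prec> B)"
    show "m \<oplus> \<one> \<preceq> n \<longrightarrow> (\<exists>B. \<forall>i y. i \<prec> m \<oplus> \<one> \<and> pr M i y \<in> Y \<longrightarrow> pr M i y \<prec> B)"
    proof
      assume "m \<oplus> \<one> \<preceq> n"
      then have mn: "m \<prec> n" using suc_le_iff by blast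
      then obtain B where B: "\<And>i y. i \<prec> m \<and> pr M i y \<in> Y \<Longrightarrow> pr M i y \<prec> B" using IH by blast
      obtain y0 where y0: "pr M m y0 \<in> Y" "\<And>y. pr M m y \<in> Y \<Longrightarrow> y = y0" using fn[OF mn] by blast
      define B' where "B' = L.max B (pr M m y0 \<oplus> \<one>)"
      have "pr M i y \<prec> B'" if "i \<prec> m \<oplus> \<one> \<and> pr M i y \<in> Y" for i y
        using that B y0 less_suc_self unfolding B'_def less_suc L.less_max_iff_disj by blast
      then show "\<exists>B. \<forall>i y. i \<prec> m \<oplus> \<one> \<and> pr M i y \<in> Y \<longrightarrow> pr M i y \<prec> B" by blast
    qed
  qed (use Y in simp_all)
  then show ?thesis by blast
qed

lemma seq_code_exists:
  assumes Y: "Y \<in> sets M" and fn: "\<And>i. i \<prec> n \<Longrightarrow> \<exists>!y. pr M i y \<in> Y"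
  shows "\<exists>c. len c n \<and> (\<forall>i y. i \<prec> n \<longrightarrow> (entry c i y \<longleftrightarrow> pr M i y \<in> Y))"
proof -
  obtain B where B: "\<And>i y. i \<prec> n \<and> pr M i y \<in> Y \<Longrightarrow> pr M i y \<prec> B"
    using functional_graph_bounded[OF Y fn] by blast
  obtain d where d: "\<zero> \<prec> d" "\<And>k. \<zero> \<prec> k \<and> k \<preceq> B \<Longrightarrow> dvdM k d" using common_multiple_exists by blast
  let ?Y' = "{z. \<exists>i y. z = pr M i y \<and> i \<prec> n \<and> pr M i y \<in> Y}"
  have Y': "?Y' \<in> sets M"
    by (rule definable_set[where E="\<lambda>_. Y" and e="\<lambda>_. n" and v=0 and
        p="ExN 2 (ExN 3 (Conj (Equ (Var 0) (PairT (Var 2) (Var 3))) (Conj (Less (Var 2) (Var 1)) (In (PairT (Var 2) (Var 3)) 0))))"])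
       (use Y in simp_all)
  obtain s where s: "\<And>z. z \<prec> B \<Longrightarrow> (dvdM (modulus d z) s \<longleftrightarrow> z \<in> ?Y')" using set_code_exists[OF d Y'] by blast
  have "len (code n B d s) n" by (auto simp: len_def)
  moreover have "entry (code n B d s) i y \<longleftrightarrow> pr M i y \<in> Y" if i: "i \<prec> n" for i y
  proof
    assume "entry (code n B d s) i y"
    then have "pr M i y \<prec> B" "dvdM (modulus d (pr M i y)) s" by (auto simp: entry_code)
    then show "pr M i y \<in> Y" using s by auto
  next
    assume "pr M i y \<in> Y"
    then have "pr M i y \<prec> B" "pr M i y \<in> ?Y'" using B i by blast+
    then show "entry (code n B d s) i y" using s i by (simp add: entry_code)
  qed
  ultimately show ?thesis by blast
qed

lemma empty_seq_code: "\<exists>c. len c \<zero>"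
  using seq_code_exists[OF no_sets[of 0], of \<zero>] by simp

lemma seq_snoc:
  assumes lc: "len c n" and fn: "\<And>i. i \<prec> n \<Longrightarrow> \<exists>!y. entry c i y"
  shows "\<exists>c'. len c' (n \<oplus> \<one>) \<and> (\<forall>i y. entry c' i y \<longleftrightarrow> entry c i y \<or> (i = n \<and> y = v))"
proof -
  let ?Q = "\<lambda>i y. (i \<prec> n \<and> entry c i y) \<or> (i = n \<and> y = v)"
  let ?Y = "{q. \<exists>i y. q = pr M i y \<and> ?Q i y}"
  have sY: "?Y \<in> sets M"
    by (rule definable_set[where E=no_sets and e="\<lambda>i. if i = 3 then n else if i = 4 then c else v" and v=0 and
         p="ExN 1 (ExN 2 (Conj (Equ (Var 0) (PairT (Var 1) (Var 2))) (Or (Conj (Less (Var 1) (Var 3)) (entryF 10 (Var 4) (Var 1) (Var 2))) (Conj (Equ (Var 1) (Var 3)) (Equ (Var 2) (Var 5))))))"])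
       simp_all
  have memY: "pr M i y \<in> ?Y \<longleftrightarrow> ?Q i y" for i y by simp
  have "\<exists>!y. pr M i y \<in> ?Y" if "i \<prec> n \<oplus> \<one>" for i
  proof (cases "i = n")
    case False
    then have "i \<prec> n" using that less_suc by blast
    then show ?thesis unfolding memY using fn False by simp
  qed (simp add: memY)
  then obtain c' where lc': "len c' (n \<oplus> \<one>)"
    and dc': "\<And>i y. i \<prec> n \<oplus> \<one> \<Longrightarrow> entry c' i y \<longleftrightarrow> ?Q i y"
    using seq_code_exists[OF sY] unfolding memY by blast
  have "entry c' i y \<longleftrightarrow> entry c i y \<or> (i = n \<and> y = v)" for i y
    using dc'[of i y] entry_less_len[OF _ lc'] entry_less_len[OF _ lc] less_suc_self less_trans
    by blast
  then show ?thesis using lc' by blast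
qed

end

section \<open>The Kleene-Brouwer order on sequences descending in both orders\<close>

text \<open>Formulas refer to \<open>D\<^sub>\<alpha>, R\<^sub>\<alpha>, D\<^sub>\<beta>, R\<^sub>\<beta>\<close> as set variables 0-3 (as in
  \<open>env4\<close>), to \<open>disj(\<alpha>, \<beta>)\<close> as 4, 5 and to one further set as 6.\<close>

definition in_treeF :: "nat \<Rightarrow> trm \<Rightarrow> afm" where
  "in_treeF b t = ExN (b+1) (Conj (lenF (b+10) t (Var (b+1)))
    (Conj (AllN (b+2) (Imp (Less (Var (b+2)) (Var (b+1))) (ExN (b+3) (entryF (b+10) t (Var (b+2)) (Var (b+3))))))
    (Conj (AllN (b+2) (AllN (b+3) (AllN (b+4) (Imp (Conj (entryF (b+10) t (Var (b+2)) (Var (b+3))) (entryF (b+10) t (Var (b+2)) (Var (b+4)))) (Equ (Var (b+3)) (Var (b+4)))))))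
    (Conj (AllN (b+2) (AllN (b+3) (Imp (entryF (b+10) t (Var (b+2)) (Var (b+3))) (ExN (b+4) (ExN (b+5) (Conj (Equ (Var (b+3)) (PairT (Var (b+4)) (Var (b+5)))) (Conj (In (Var (b+4)) 0) (In (Var (b+5)) 2))))))))
    (AllN (b+2) (AllN (b+3) (AllN (b+4) (AllN (b+5) (AllN (b+6) (Imp (Conj (entryF (b+10) t (Var (b+2)) (PairT (Var (b+3)) (Var (b+4)))) (entryF (b+10) t (Add (Var (b+2)) One) (PairT (Var (b+5)) (Var (b+6))))) (Conj (In (PairT (Var (b+5)) (Var (b+3))) 1) (In (PairT (Var (b+6)) (Var (b+4))) 3))))))))))))"

definition same_seqF :: "nat \<Rightarrow> trm \<Rightarrow> trm \<Rightarrow> afm" where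
  "same_seqF b t t' = Conj (ExN (b+1) (Conj (lenF (b+10) t (Var (b+1))) (lenF (b+10) t' (Var (b+1)))))
     (AllN (b+2) (AllN (b+3) (Iff (entryF (b+10) t (Var (b+2)) (Var (b+3))) (entryF (b+10) t' (Var (b+2)) (Var (b+3))))))"

definition nodeF :: "nat \<Rightarrow> trm \<Rightarrow> afm" where
  "nodeF b t = Conj (in_treeF b t) (AllN (b+1) (Imp (Less (Var (b+1)) t) (Neg (same_seqF (b+20) (Var (b+1)) t))))"

definition KBF :: "nat \<Rightarrow> trm \<Rightarrow> trm \<Rightarrow> afm" where
  "KBF b t t' = Or
    (ExN (b+1) (ExN (b+2) (Conj (lenF (b+10) t (Var (b+1))) (Conj (lenF (b+10) t' (Var (b+2)))
       (Conj (Less (Var (b+2)) (Var (b+1))) (AllN (b+3) (AllN (b+4) (Imp (entryF (b+10) t' (Var (b+3)) (Var (b+4))) (entryF (b+10) t (Var (b+3)) (Var (b+4)))))))))))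
    (ExN (b+1) (ExN (b+2) (ExN (b+3) (Conj (entryF (b+10) t (Var (b+1)) (Var (b+2))) (Conj (entryF (b+10) t' (Var (b+1)) (Var (b+3)))
       (Conj (Less (Var (b+2)) (Var (b+3))) (AllN (b+4) (AllN (b+5) (Imp (Conj (Less (Var (b+4)) (Var (b+1))) (entryF (b+10) t' (Var (b+4)) (Var (b+5)))) (entryF (b+10) t (Var (b+4)) (Var (b+5))))))))))))"

definition disj_dom_fm :: afm where "disj_dom_fm = nodeF 100 (Var 0)"
definition disj_rel_fm :: afm where
  "disj_rel_fm = ExN 1 (ExN 2 (Conj (Equ (Var 0) (PairT (Var 1) (Var 2))) (Conj (nodeF 100 (Var 1)) (Conj (nodeF 100 (Var 2)) (KBF 100 (Var 1) (Var 2))))))"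

locale two_orders = aca0 +
  fixes DA RA DB RB :: "nat set"
  assumes sDA: "DA \<in> sets M" and sRA: "RA \<in> sets M" and sDB: "DB \<in> sets M" and sRB: "RB \<in> sets M"
    and loA: "LO M DA RA" and loB: "LO M DB RB"
begin

definition in_tree :: "nat \<Rightarrow> bool" where
  "in_tree c \<longleftrightarrow> (\<exists>n. len c n \<and> (\<forall>i. i \<prec> n \<longrightarrow> (\<exists>y. entry c i y))
     \<and> (\<forall>i y y'. entry c i y \<and> entry c i y' \<longrightarrow> y = y')
     \<and> (\<forall>i y. entry c i y \<longrightarrow> (\<exists>x w. y = pr M x w \<and> x \<in> DA \<and> w \<in> DB))
     \<and> (\<forall>i x w x' w'. entry c i (pr M x w) \<and> entry c (i \<oplus> \<one>) (pr M x' w') \<longrightarrow> pr M x' x \<in> RA \<and> pr M w' w \<in> RB))"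

definition same_seq :: "nat \<Rightarrow> nat \<Rightarrow> bool" where
  "same_seq c c' \<longleftrightarrow> (\<exists>n. len c n \<and> len c' n) \<and> (\<forall>i y. entry c i y \<longleftrightarrow> entry c' i y)"

definition node :: "nat \<Rightarrow> bool" where
  "node c \<longleftrightarrow> in_tree c \<and> (\<forall>c'. c' \<prec> c \<longrightarrow> \<not> same_seq c' c)"

definition KB :: "nat \<Rightarrow> nat \<Rightarrow> bool" where
  "KB c c' \<longleftrightarrow> (\<exists>n n'. len c n \<and> len c' n' \<and> n' \<prec> n \<and> (\<forall>i y. entry c' i y \<longrightarrow> entry c i y))
     \<or> (\<exists>i y y'. entry c i y \<and> entry c' i y' \<and> y \<prec> y' \<and> (\<forall>j z. j \<prec> i \<and> entry c' j z \<longrightarrow> entry c j z))"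

lemma sat_in_treeF[simp]:
  assumes "E 0 = DA" "E 1 = RA" "E 2 = DB" "E 3 = RB" "below (b+1) t"
  shows "sat M e E (in_treeF b t) \<longleftrightarrow> in_tree (ev M e t)"
proof -
  have [simp]: "below (b+10) t" using assms(5) below_mono by fastforce
  have [simp]: "\<And>v. b < v \<Longrightarrow> v \<notin> tvars t" using assms(5) below_notin by fastforce
  show ?thesis using assms(1-4) by (simp add: in_treeF_def in_tree_def)
qed

lemma sat_same_seqF[simp]:
  assumes "below (b+1) t" "below (b+1) t'"
  shows "sat M e E (same_seqF b t t') \<longleftrightarrow> same_seq (ev M e t) (ev M e t')"
proof -
  have [simp]: "below (b+10) t" "below (b+10) t'" using assms below_mono by fastforce+
  have [simp]: "\<And>v. b < v \<Longrightarrow> v \<notin> tvars t" "\<And>v. b < v \<Longrightarrow> v \<notin> tvars t'" using assms below_notin by fastforce+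
  show ?thesis by (simp add: same_seqF_def same_seq_def)
qed

lemma sat_nodeF[simp]:
  assumes "E 0 = DA" "E 1 = RA" "E 2 = DB" "E 3 = RB" "below (b+1) t"
  shows "sat M e E (nodeF b t) \<longleftrightarrow> node (ev M e t)"
proof -
  have [simp]: "below (b+21) t" using assms(5) below_mono by fastforce
  have [simp]: "\<And>v. b < v \<Longrightarrow> v \<notin> tvars t" using assms(5) below_notin by fastforce
  have s: "sat M e' E (same_seqF (b+20) (Var (Suc b)) t) \<longleftrightarrow> same_seq (e' (Suc b)) (ev M e' t)" for e'
  proof -
    have h1: "below (b+20+1) t" using below_mono[OF assms(5)] by simp
    have h2: "below (b+20+1) (Var (Suc b))" by simp
    show ?thesis using sat_same_seqF[OF h2 h1, of e' E] by simp
  qed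
  show ?thesis using assms by (simp add: nodeF_def node_def s)
qed

lemma sat_KBF[simp]:
  assumes "below (b+1) t" "below (b+1) t'"
  shows "sat M e E (KBF b t t') \<longleftrightarrow> KB (ev M e t) (ev M e t')"
proof -
  have [simp]: "below (b+10) t" "below (b+10) t'" using assms below_mono by fastforce+
  have [simp]: "\<And>v. b < v \<Longrightarrow> v \<notin> tvars t" "\<And>v. b < v \<Longrightarrow> v \<notin> tvars t'" using assms below_notin by fastforce+
  show ?thesis by (simp add: KBF_def KB_def)
qed

definition disj_dom :: "nat set" where "disj_dom = {a. node a}"
definition disj_rel :: "nat set" where "disj_rel = {a. \<exists>c c'. a = pr M c c' \<and> node c \<and> node c' \<and> KB c c'}"

lemma cterm_disj_dom: "cterm M disj_dom_fm e DA RA DB RB = disj_dom"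
  by (simp add: cterm_def disj_dom_fm_def disj_dom_def env4_def)

lemma cterm_disj_rel: "cterm M disj_rel_fm e DA RA DB RB = disj_rel"
  by (simp add: cterm_def disj_rel_fm_def disj_rel_def env4_def)

lemma env4_sets: "env4 DA RA DB RB i \<in> sets M"
  using sDA sRA sDB sRB by (simp add: env4_def)

lemma disj_dom_sets: "disj_dom \<in> sets M"
  using arith_comprehension[of "env4 DA RA DB RB" "\<lambda>_. 0" 0 disj_dom_fm, OF env4_sets] cterm_disj_dom
  unfolding cterm_def by simp

lemma disj_rel_sets: "disj_rel \<in> sets M"
  using arith_comprehension[of "env4 DA RA DB RB" "\<lambda>_. 0" 0 disj_rel_fm, OF env4_sets] cterm_disj_rel
  unfolding cterm_def by simp

definition env_with :: "nat set \<Rightarrow> nat \<Rightarrow> nat set" where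
  "env_with H i = (if i = 0 then DA else if i = 1 then RA else if i = 2 then DB else if i = 3 then RB
     else if i = 4 then disj_dom else if i = 5 then disj_rel else H)"

lemma env_with_sets: "H \<in> sets M \<Longrightarrow> env_with H i \<in> sets M"
  using sDA sRA sDB sRB disj_dom_sets disj_rel_sets by (simp add: env_with_def)

lemma orderA:
  "pr M x y \<in> RA \<Longrightarrow> x \<in> DA \<and> y \<in> DA" "pr M x x \<notin> RA"
  "pr M x y \<in> RA \<Longrightarrow> pr M y z \<in> RA \<Longrightarrow> pr M x z \<in> RA"
  using loA unfolding LO_def by blast+

lemma orderB: "pr M x y \<in> RB \<Longrightarrow> x \<in> DB \<and> y \<in> DB"
  using loB unfolding LO_def by blast

lemma in_treeD:
  assumes "in_tree c"
  obtains n where "len c n" "\<And>i. i \<prec> n \<Longrightarrow> \<exists>y. entry c i y"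
    "\<And>i y y'. entry c i y \<Longrightarrow> entry c i y' \<Longrightarrow> y = y'"
    "\<And>i y. entry c i y \<Longrightarrow> \<exists>x w. y = pr M x w \<and> x \<in> DA \<and> w \<in> DB"
    "\<And>i x w x' w'. entry c i (pr M x w) \<Longrightarrow> entry c (i \<oplus> \<one>) (pr M x' w') \<Longrightarrow>
      pr M x' x \<in> RA \<and> pr M w' w \<in> RB"
  using assms unfolding in_tree_def by (elim exE conjE) (rule that; blast)

lemma in_tree_uniq: "in_tree c \<Longrightarrow> entry c i y \<Longrightarrow> entry c i y' \<Longrightarrow> y = y'"
  unfolding in_tree_def by blast

lemma in_tree_fill: "in_tree c \<Longrightarrow> len c n \<Longrightarrow> i \<prec> n \<Longrightarrow> \<exists>y. entry c i y"
  unfolding in_tree_def by (metis len_unique)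

lemma in_tree_has_len: "in_tree c \<Longrightarrow> \<exists>n. len c n"
  unfolding in_tree_def by blast

lemma KB_extI:
  "len c n \<Longrightarrow> len c' n' \<Longrightarrow> n' \<prec> n \<Longrightarrow> (\<And>i y. entry c' i y \<Longrightarrow> entry c i y) \<Longrightarrow> KB c c'"
  unfolding KB_def by blast

lemma KB_branchI:
  "entry c i y \<Longrightarrow> entry c' i y' \<Longrightarrow> y \<prec> y' \<Longrightarrow> (\<And>j z. j \<prec> i \<Longrightarrow> entry c' j z \<Longrightarrow> entry c j z)
    \<Longrightarrow> KB c c'"
  unfolding KB_def by blast

lemma KB_cases:
  assumes "KB c c'"
  obtains (ext) n n' where "len c n" "len c' n'" "n' \<prec> n" "\<And>i y. entry c' i y \<Longrightarrow> entry c i y"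
  | (branch) i y y' where "entry c i y" "entry c' i y'" "y \<prec> y'"
      "\<And>j z. j \<prec> i \<Longrightarrow> entry c' j z \<Longrightarrow> entry c j z"
  using assms unfolding KB_def by blast

lemma KB_irrefl:
  assumes "in_tree c"
  shows "\<not> KB c c"
proof
  assume "KB c c"
  then show False
  proof (cases rule: KB_cases)
    case (ext n n')
    then show False using len_unique by blast
  next
    case (branch i y y')
    then show False using in_tree_uniq[OF assms] by blast
  qed
qed

lemma KB_trans_ext:
  assumes l1: "len c1 n1" and l2: "len c2 n2" and n21: "n2 \<prec> n1"
    and sub12: "\<And>i y. entry c2 i y \<Longrightarrow> entry c1 i y" and k23: "KB c2 c3"
  shows "KB c1 c3"
  using k23
proof (cases rule: KB_cases)
  case (ext m2 n3)
  have "m2 = n2" using len_unique ext(1) l2 by blast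
  then have "n3 \<prec> n1" using ext(3) n21 less_trans by blast
  then show ?thesis using KB_extI[OF l1 ext(2)] sub12 ext(4) by blast
next
  case (branch i y y')
  then show ?thesis using sub12 by (blast intro: KB_branchI)
qed

lemma KB_trans_branch_ext:
  assumes c2: "in_tree c2" and c3: "in_tree c3"
    and d1: "entry c1 i y" and d2: "entry c2 i y'" and yy: "y \<prec> y'"
    and below12: "\<And>j z. j \<prec> i \<Longrightarrow> entry c2 j z \<Longrightarrow> entry c1 j z"
    and l3: "len c3 n3" and sub23: "\<And>j z. entry c3 j z \<Longrightarrow> entry c2 j z"
  shows "KB c1 c3"
proof (cases "i \<prec> n3")
  case True
  then obtain y3 where y3: "entry c3 i y3" using in_tree_fill[OF c3 l3] by blast
  then have "y3 = y'" using sub23 d2 in_tree_uniq[OF c2] by blast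
  then show ?thesis using KB_branchI[OF d1 y3] yy below12 sub23 by blast
next
  case False
  then have n3i: "n3 \<preceq> i" using not_less by blast
  obtain n1 where l1: "len c1 n1" and "i \<prec> n1" using entry_has_len d1 by blast
  then have "n3 \<prec> n1" using n3i L.le_less_trans by blast
  moreover have "entry c1 j z" if "entry c3 j z" for j z
  proof -
    have "j \<prec> i" using entry_less_len[OF that l3] n3i L.less_le_trans by blast
    then show ?thesis using below12 sub23 that by blast
  qed
  ultimately show ?thesis using KB_extI[OF l1 l3] by blast
qed

lemma KB_trans_branch_branch:
  assumes c2: "in_tree c2" and c3: "in_tree c3"
    and d1: "entry c1 i y" and d2: "entry c2 i y'" and yy: "y \<prec> y'"
    and below12: "\<And>j z. j \<prec> i \<Longrightarrow> entry c2 j z \<Longrightarrow> entry c1 j z"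
    and e2: "entry c2 k u" and e3: "entry c3 k u'" and uu: "u \<prec> u'"
    and below23: "\<And>j z. j \<prec> k \<Longrightarrow> entry c3 j z \<Longrightarrow> entry c2 j z"
  shows "KB c1 c3"
proof -
  consider "i \<prec> k" | "k \<prec> i" | "i = k" using less_linear by blast
  then show ?thesis
  proof cases
    case 1
    obtain n3 where l3: "len c3 n3" and "k \<prec> n3" using entry_has_len e3 by blast
    then obtain y3 where y3: "entry c3 i y3" using in_tree_fill[OF c3 l3] 1 less_trans by blast
    then have "y3 = y'" using below23 1 d2 in_tree_uniq[OF c2] by blast
    moreover have "entry c1 j z" if "j \<prec> i" "entry c3 j z" for j z
      using that below12 below23 1 less_trans by blast
    ultimately show ?thesis using KB_branchI[OF d1 y3] yy by blast
  next
    case 2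
    have "entry c1 j z" if "j \<prec> k" "entry c3 j z" for j z
      using that below12 below23 2 less_trans by blast
    then show ?thesis using KB_branchI[OF _ e3 uu] below12 e2 2 by blast
  next
    case 3
    then have "y \<prec> u'" using d2 e2 uu in_tree_uniq[OF c2] yy less_trans by blast
    then show ?thesis using KB_branchI[OF d1] e3 below23 below12 3 by blast
  qed
qed

lemma KB_trans:
  assumes "in_tree c2" "in_tree c3" "KB c1 c2" "KB c2 c3"
  shows "KB c1 c3"
  using assms(3)
proof (cases rule: KB_cases)
  case (ext n1 n2)
  then show ?thesis using KB_trans_ext assms(4) by blast
next
  case (branch i y y')
  note left12 = branch
  from assms(4) show ?thesis
  proof (cases rule: KB_cases)
    case (ext n2 n3)
    then show ?thesis using KB_trans_branch_ext[OF assms(1,2) left12] by blast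
  next
    case (branch k u u')
    then show ?thesis using KB_trans_branch_branch[OF assms(1,2) left12] by blast
  qed
qed

lemma common_prefix:
  assumes "len c n" "len c' n'"
  obtains i where "i \<preceq> n" "i \<preceq> n'" "\<And>j y. j \<prec> i \<Longrightarrow> entry c j y \<longleftrightarrow> entry c' j y"
    and "i = n \<or> i = n' \<or> \<not> (\<forall>y. entry c i y \<longleftrightarrow> entry c' i y)"
proof -
  let ?D = "\<lambda>i. \<not> (i \<prec> n \<and> i \<prec> n' \<and> (\<forall>y. entry c i y \<longleftrightarrow> entry c' i y))"
  have "\<exists>i. ?D i \<and> (\<forall>j. ?D j \<longrightarrow> i \<preceq> j)"
    by (rule least_number[where E=no_sets and e="\<lambda>i. if i = 1 then c else if i = 2 then c' else if i = 3 then n else n'" and v=0 and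
          p="Neg (Conj (Less (Var 0) (Var 3)) (Conj (Less (Var 0) (Var 4)) (AllN 5 (Iff (entryF 10 (Var 1) (Var 0) (Var 5)) (entryF 10 (Var 2) (Var 0) (Var 5))))))"
          and x=n]) simp_all
  then obtain i where Di: "?D i" and imin: "\<And>j. ?D j \<Longrightarrow> i \<preceq> j" by blast
  have agree: "j \<prec> n \<and> j \<prec> n' \<and> (\<forall>y. entry c j y \<longleftrightarrow> entry c' j y)" if "j \<prec> i" for j
    using imin[of j] that less_asym by blast
  have "i \<preceq> n" "i \<preceq> n'" using agree[of n] agree[of n'] not_less by blast+
  moreover have "\<And>j y. j \<prec> i \<Longrightarrow> entry c j y \<longleftrightarrow> entry c' j y" using agree by blast
  moreover have "i = n \<or> i = n' \<or> \<not> (\<forall>y. entry c i y \<longleftrightarrow> entry c' i y)"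
    using Di \<open>i \<preceq> n\<close> \<open>i \<preceq> n'\<close> by blast
  ultimately show ?thesis by (rule that)
qed

lemma same_seq_sym: "same_seq c c' \<Longrightarrow> same_seq c' c"
  unfolding same_seq_def by blast

lemma node_eq: "node c \<Longrightarrow> node c' \<Longrightarrow> same_seq c c' \<Longrightarrow> c = c'"
  unfolding node_def using less_linear same_seq_sym by metis

lemma KB_total:
  assumes nc: "node c" and nc': "node c'" and ne: "c \<noteq> c'"
  shows "KB c c' \<or> KB c' c"
proof -
  have vc: "in_tree c" and vc': "in_tree c'" using nc nc' node_def by blast+
  obtain n n' where ln: "len c n" and ln': "len c' n'" using vc vc' in_tree_has_len by blast
  obtain i where i: "i \<preceq> n" "i \<preceq> n'" and agree: "\<And>j y. j \<prec> i \<Longrightarrow> entry c j y \<longleftrightarrow> entry c' j y"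
    and diff: "i = n \<or> i = n' \<or> \<not> (\<forall>y. entry c i y \<longleftrightarrow> entry c' i y)"
    using common_prefix[OF ln ln'] by blast
  have sub: "entry c' j y \<Longrightarrow> entry c j y" if "i = n'" for j y
    using agree entry_less_len[OF _ ln'] that by blast
  have sub': "entry c j y \<Longrightarrow> entry c' j y" if "i = n" for j y
    using agree entry_less_len[OF _ ln] that by blast
  consider "i = n" "i = n'" | "i = n" "i \<prec> n'" | "i = n'" "i \<prec> n"
    | "i \<prec> n" "i \<prec> n'" "\<not> (\<forall>y. entry c i y \<longleftrightarrow> entry c' i y)"
    using i diff by blast
  then show ?thesis
  proof cases
    case 1
    then have "same_seq c c'" unfolding same_seq_def using ln ln' sub sub' by blast
    then show ?thesis using node_eq nc nc' ne by blast
  next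
    case 2
    then show ?thesis using KB_extI[OF ln' ln] sub' by blast
  next
    case 3
    then show ?thesis using KB_extI[OF ln ln'] sub by blast
  next
    case 4
    obtain y y' where y: "entry c i y" and y': "entry c' i y'"
      using in_tree_fill[OF vc ln] in_tree_fill[OF vc' ln'] 4 by blast
    then have "y \<noteq> y'" using 4(3) in_tree_uniq[OF vc] in_tree_uniq[OF vc'] by blast
    then have "y \<prec> y' \<or> y' \<prec> y" using less_linear by blast
    then show ?thesis using KB_branchI[OF y y'] KB_branchI[OF y' y] agree by blast
  qed
qed

lemma disj_rel_iff: "pr M x y \<in> disj_rel \<longleftrightarrow> node x \<and> node y \<and> KB x y"
  unfolding disj_rel_def by auto

lemma LO_disj: "LO M disj_dom disj_rel"
proof -
  have "\<forall>x y. pr M x y \<in> disj_rel \<longrightarrow> x \<in> disj_dom \<and> y \<in> disj_dom"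
    by (simp add: disj_rel_iff disj_dom_def)
  moreover have "\<forall>x. pr M x x \<notin> disj_rel" using KB_irrefl node_def disj_rel_iff by blast
  moreover have "\<forall>x y z. pr M x y \<in> disj_rel \<and> pr M y z \<in> disj_rel \<longrightarrow> pr M x z \<in> disj_rel"
    using KB_trans node_def disj_rel_iff by metis
  moreover have "\<forall>x\<in>disj_dom. \<forall>y\<in>disj_dom. pr M x y \<in> disj_rel \<or> x = y \<or> pr M y x \<in> disj_rel"
    using KB_total disj_rel_iff disj_dom_def by auto
  ultimately show ?thesis unfolding LO_def by blast
qed

end

section \<open>A descending sequence in \<open>disj(\<alpha>, \<beta>)\<close> has a limit path\<close>

definition stable_prefixF :: "nat \<Rightarrow> trm \<Rightarrow> trm \<Rightarrow> trm \<Rightarrow> afm" where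
  "stable_prefixF b tn tK tc = Conj (In (PairT tK tc) 6) (Conj (ExN (b+3) (Conj (lenF (b+20) tc (Var (b+3))) (Leq tn (Var (b+3)))))
     (AllN (b+4) (AllN (b+5) (AllN (b+7) (AllN (b+8) (Imp (Conj (Leq tK (Var (b+4))) (Conj (In (PairT (Var (b+4)) (Var (b+5))) 6)
       (Conj (Less (Var (b+7)) tn) (entryF (b+20) tc (Var (b+7)) (Var (b+8)))))) (entryF (b+20) (Var (b+5)) (Var (b+7)) (Var (b+8)))))))))"

locale disj_ill_founded = two_orders +
  fixes H :: "nat set"
  assumes sH: "H \<in> sets M" and dH: "desc_seq M disj_dom disj_rel H"
begin

definition hseq :: "nat \<Rightarrow> nat" where "hseq k = (THE c. pr M k c \<in> H)"

lemma hseq_in_H: "pr M k (hseq k) \<in> H" and hseq_uniq: "pr M k c \<in> H \<Longrightarrow> c = hseq k"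
proof -
  have "\<exists>!c. pr M k c \<in> H" using dH unfolding desc_seq_def by blast
  then show "pr M k (hseq k) \<in> H" unfolding hseq_def by (rule theI')
  then show "pr M k c \<in> H \<Longrightarrow> c = hseq k" using \<open>\<exists>!c. pr M k c \<in> H\<close> by blast
qed

lemma hseq_node: "node (hseq k)" and hseq_step: "KB (hseq (k \<oplus> \<one>)) (hseq k)"
proof -
  have "hseq k \<in> disj_dom \<and> hseq (k \<oplus> \<one>) \<in> disj_dom \<and> pr M (hseq (k \<oplus> \<one>)) (hseq k) \<in> disj_rel"
    using dH hseq_in_H[of k] hseq_in_H[of "k \<oplus> \<one>"] unfolding desc_seq_def by blast
  then show "node (hseq k)" "KB (hseq (k \<oplus> \<one>)) (hseq k)" by (auto simp: disj_dom_def disj_rel_iff)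
qed

lemma hseq_in_tree: "in_tree (hseq k)"
  using hseq_node node_def by blast

lemma hseq_KB: "k \<prec> k' \<Longrightarrow> KB (hseq k') (hseq k)"
proof -
  assume kk: "k \<prec> k'"
  have "\<forall>k'. k \<prec> k' \<longrightarrow> (\<exists>c c'. pr M k c \<in> H \<and> pr M k' c' \<in> H \<and> pr M c' c \<in> disj_rel)"
  proof (rule arith_induct[where E="env_with H" and e="\<lambda>_. k" and v=0 and
      p="Imp (Less (Var 1) (Var 0)) (ExN 2 (ExN 3 (Conj (In (PairT (Var 1) (Var 2)) 6) (Conj (In (PairT (Var 0) (Var 3)) 6) (In (PairT (Var 3) (Var 2)) 5)))))"])
    fix n assume IH: "k \<prec> n \<longrightarrow> (\<exists>c c'. pr M k c \<in> H \<and> pr M n c' \<in> H \<and> pr M c' c \<in> disj_rel)"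
    have "KB (hseq (n \<oplus> \<one>)) (hseq k)" if "k \<prec> n \<oplus> \<one>"
    proof (cases "k = n")
      case False
      then have "KB (hseq n) (hseq k)"
        using that IH hseq_uniq disj_rel_iff by (metis less_suc)
      then show ?thesis using KB_trans hseq_in_tree hseq_step by blast
    qed (simp add: hseq_step)
    then show "k \<prec> n \<oplus> \<one> \<longrightarrow> (\<exists>c c'. pr M k c \<in> H \<and> pr M (n \<oplus> \<one>) c' \<in> H \<and> pr M c' c \<in> disj_rel)"
      using hseq_in_H hseq_node disj_rel_iff by blast
  qed (rule env_with_sets[OF sH], simp add: env_with_def, simp)
  then show ?thesis using kk hseq_uniq disj_rel_iff by blast
qed

lemma hseq_len: "\<exists>m. len (hseq k) m"
  using hseq_in_tree in_tree_has_len by blast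

definition stable_prefix :: "nat \<Rightarrow> nat \<Rightarrow> nat \<Rightarrow> bool" where
  "stable_prefix n K c \<longleftrightarrow> pr M K c \<in> H \<and> (\<exists>m. len c m \<and> n \<preceq> m)
     \<and> (\<forall>k c' j y. K \<preceq> k \<and> pr M k c' \<in> H \<and> j \<prec> n \<and> entry c j y \<longrightarrow> entry c' j y)"

lemma sat_stable_prefixF[simp]:
  assumes "E 6 = H" "below b tn" "below b tK" "below b tc"
  shows "sat M e E (stable_prefixF b tn tK tc) \<longleftrightarrow> stable_prefix (ev M e tn) (ev M e tK) (ev M e tc)"
proof -
  have [simp]: "\<And>v. b \<le> v \<Longrightarrow> v \<notin> tvars tn" "\<And>v. b \<le> v \<Longrightarrow> v \<notin> tvars tK" "\<And>v. b \<le> v \<Longrightarrow> v \<notin> tvars tc"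
    using assms below_notin by blast+
  have [simp]: "below (b+20) tn" "below (b+20) tK" "below (b+20) tc" using assms below_mono by fastforce+
  show ?thesis using assms(1) by (simp add: stable_prefixF_def stable_prefix_def)
qed

lemma stable_prefix_hseq: "stable_prefix n K c \<Longrightarrow> c = hseq K"
  unfolding stable_prefix_def using hseq_uniq by blast

lemma stable_prefix_agree:
  assumes sp: "stable_prefix n K c" and Kk: "K \<preceq> k" and jn: "j \<prec> n"
  shows "entry (hseq k) j y \<longleftrightarrow> entry c j y"
proof -
  obtain m where "len c m" "n \<preceq> m" using sp unfolding stable_prefix_def by blast
  then obtain y0 where y0: "entry c j y0"
    using in_tree_fill hseq_in_tree stable_prefix_hseq[OF sp] jn L.less_le_trans by metis
  have "entry (hseq k) j z" if "entry c j z" for z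
    using sp Kk jn that hseq_in_H unfolding stable_prefix_def by blast
  then show ?thesis
    using y0 in_tree_uniq[OF hseq_in_tree] in_tree_uniq[OF hseq_in_tree[of K]] stable_prefix_hseq[OF sp]
    by metis
qed

lemma stable_prefix_len:
  assumes sp: "stable_prefix n K c" and Kk: "K \<preceq> k" and lm: "len (hseq k) m"
  shows "n \<preceq> m"
proof (cases "n = \<zero>")
  case False
  then obtain n0 where n0: "n = n0 \<oplus> \<one>" using zero_or_suc by blast
  obtain mc where "len c mc" "n \<preceq> mc" using sp unfolding stable_prefix_def by blast
  then obtain y where "entry c n0 y"
    using in_tree_fill hseq_in_tree stable_prefix_hseq[OF sp] n0 less_suc_self L.less_le_trans by metis
  then have "entry (hseq k) n0 y" using stable_prefix_agree[OF sp Kk] n0 less_suc_self by blast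
  then show ?thesis using entry_less_len[OF _ lm] n0 suc_le_iff by blast
qed (use zero_le in blast)

lemma stable_prefix_eventually_longer:
  assumes sp: "stable_prefix n K c"
  obtains K1 where "K \<preceq> K1" "\<And>k m. K1 \<preceq> k \<Longrightarrow> len (hseq k) m \<Longrightarrow> n \<prec> m"
proof (cases "\<exists>k0. K \<preceq> k0 \<and> len (hseq k0) n")
  case True
  then obtain k0 where k0: "K \<preceq> k0" "len (hseq k0) n" by blast
  have "n \<prec> m" if kk: "k0 \<oplus> \<one> \<preceq> k" and lm: "len (hseq k) m" for k m
  proof -
    have k0k: "k0 \<prec> k" using kk suc_le_iff by blast
    then have Kk: "K \<preceq> k" using k0(1) L.le_less_trans by blast
    have "m \<noteq> n"
    proof
      assume mn: "m = n"
      from hseq_KB[OF k0k] show False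
      proof (cases rule: KB_cases)
        case (ext a b)
        then show False using lm k0(2) mn len_unique by (metis less_irrefl)
      next
        case (branch i y y')
        have "i \<prec> n" using branch(2) k0(2) entry_less_len by blast
        then have "entry c i y" "entry c i y'"
          using stable_prefix_agree[OF sp] Kk k0(1) branch(1,2) by blast+
        then show False
          using in_tree_uniq[OF hseq_in_tree] stable_prefix_hseq[OF sp] branch(3) by (metis less_irrefl)
      qed
    qed
    then show ?thesis using stable_prefix_len[OF sp Kk lm] by blast
  qed
  moreover have "K \<preceq> k0 \<oplus> \<one>" using k0(1) less_suc_self L.le_less_trans by blast
  ultimately show ?thesis using that by blast
next
  case False
  then show ?thesis using that[of K] stable_prefix_len[OF sp] by blast
qed

lemma stable_prefix_entry_antimono:
  assumes sp: "stable_prefix n K c" and Kk: "K \<preceq> k"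
    and dv: "entry (hseq k) n v" and dv': "entry (hseq (k \<oplus> \<one>)) n v'"
  shows "v' \<preceq> v"
  using hseq_step[of k]
proof (cases rule: KB_cases)
  case (ext a b)
  then show ?thesis using dv dv' in_tree_uniq[OF hseq_in_tree] by blast
next
  case (branch i y y')
  have Kk': "K \<preceq> k \<oplus> \<one>" using Kk less_suc_self L.le_less_trans by blast
  consider "i \<prec> n" | "i = n" | "n \<prec> i" using less_linear by blast
  then show ?thesis
  proof cases
    case 1
    then have "entry c i y" "entry c i y'"
      using stable_prefix_agree[OF sp] Kk Kk' branch(1,2) by blast+
    then show ?thesis
      using in_tree_uniq[OF hseq_in_tree] stable_prefix_hseq[OF sp] branch(3) by (metis less_irrefl)
  next
    case 2
    then show ?thesis using branch(1,2,3) dv dv' in_tree_uniq[OF hseq_in_tree] by blast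
  next
    case 3
    then show ?thesis using branch(4) dv dv' in_tree_uniq[OF hseq_in_tree] by blast
  qed
qed

lemma stable_prefix_entry_bounded:
  assumes sp: "stable_prefix n K c" and K1: "K \<preceq> K1"
    and long: "\<And>k m. K1 \<preceq> k \<Longrightarrow> len (hseq k) m \<Longrightarrow> n \<prec> m"
    and ks: "K1 \<preceq> ks" "entry (hseq ks) n vs"
  shows "ks \<preceq> k \<Longrightarrow> entry (hseq k) n v \<Longrightarrow> v \<preceq> vs"
proof -
  have "\<forall>k. ks \<preceq> k \<longrightarrow> (\<exists>c' v. pr M k c' \<in> H \<and> entry c' n v \<and> v \<preceq> vs)"
  proof (rule arith_induct[where E="env_with H" and e="\<lambda>i. if i = 1 then ks else if i = 2 then n else vs" and v=0 and
      p="Imp (Leq (Var 1) (Var 0)) (ExN 4 (ExN 5 (Conj (In (PairT (Var 0) (Var 4)) 6) (Conj (entryF 10 (Var 4) (Var 2) (Var 5)) (Leq (Var 5) (Var 3))))))"])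
    show "ks \<preceq> \<zero> \<longrightarrow> (\<exists>c' v. pr M \<zero> c' \<in> H \<and> entry c' n v \<and> v \<preceq> vs)"
      using ks(2) hseq_in_H[of \<zero>] le_zero_iff by auto
  next
    fix k assume IH: "ks \<preceq> k \<longrightarrow> (\<exists>c' v. pr M k c' \<in> H \<and> entry c' n v \<and> v \<preceq> vs)"
    have "\<exists>v. entry (hseq (k \<oplus> \<one>)) n v \<and> v \<preceq> vs" if ksk: "ks \<preceq> k"
    proof -
      obtain v where v: "entry (hseq k) n v" "v \<preceq> vs" using IH ksk hseq_uniq by blast
      have K1k: "K1 \<preceq> k" using ks(1) ksk L.order_trans by blast
      then have "K1 \<preceq> k \<oplus> \<one>" using less_suc_self L.le_less_trans by blast
      then obtain v' where v': "entry (hseq (k \<oplus> \<one>)) n v'"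
        using long hseq_len in_tree_fill[OF hseq_in_tree] by metis
      have "v' \<preceq> v" using stable_prefix_entry_antimono[OF sp _ v(1) v'] K1 K1k L.order_trans by blast
      then show ?thesis using v' v(2) L.order_trans by blast
    qed
    then show "ks \<preceq> k \<oplus> \<one> \<longrightarrow> (\<exists>c' v. pr M (k \<oplus> \<one>) c' \<in> H \<and> entry c' n v \<and> v \<preceq> vs)"
      using ks(2) hseq_in_H by (metis less_suc)
  qed (rule env_with_sets[OF sH], simp add: env_with_def)
  then show "ks \<preceq> k \<Longrightarrow> entry (hseq k) n v \<Longrightarrow> v \<preceq> vs"
    using hseq_uniq in_tree_uniq[OF hseq_in_tree] by metis
qed

lemma stable_prefix_entry_stabilises:
  assumes sp: "stable_prefix n K c" and K1: "K \<preceq> K1"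
    and long: "\<And>k m. K1 \<preceq> k \<Longrightarrow> len (hseq k) m \<Longrightarrow> n \<prec> m"
  obtains ks vs where "K1 \<preceq> ks" "entry (hseq ks) n vs"
    "\<And>k v. ks \<preceq> k \<Longrightarrow> entry (hseq k) n v \<Longrightarrow> v = vs"
proof -
  obtain v0 where v0: "entry (hseq K1) n v0"
    using long hseq_len in_tree_fill[OF hseq_in_tree] by blast
  let ?V = "\<lambda>v. \<exists>k c'. K1 \<preceq> k \<and> pr M k c' \<in> H \<and> entry c' n v"
  have "\<exists>v. ?V v \<and> (\<forall>y. ?V y \<longrightarrow> v \<preceq> y)"
    by (rule least_number[where E="env_with H" and e="\<lambda>i. if i = 1 then K1 else n" and v=0 and
        p="ExN 2 (ExN 3 (Conj (Leq (Var 1) (Var 2)) (Conj (In (PairT (Var 2) (Var 3)) 6) (entryF 10 (Var 3) (Var 4) (Var 0)))))"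
        and x=v0])
       (use env_with_sets[OF sH] v0 hseq_in_H in \<open>auto simp: env_with_def\<close>)
  then obtain vs ks where ks: "K1 \<preceq> ks" "entry (hseq ks) n vs" and vmin: "\<And>y. ?V y \<Longrightarrow> vs \<preceq> y"
    using hseq_uniq by blast
  have "v = vs" if "ks \<preceq> k" "entry (hseq k) n v" for k v
  proof -
    have "v \<preceq> vs" using stable_prefix_entry_bounded[OF sp K1 long ks that] .
    moreover have "K1 \<preceq> k" using ks(1) that(1) L.order_trans by blast
    then have "vs \<preceq> v" using vmin that(2) hseq_in_H by blast
    ultimately show ?thesis using less_asym by blast
  qed
  then show ?thesis using that ks by blast
qed

lemma stable_prefix_succ:
  assumes sp: "stable_prefix n K c"
  shows "\<exists>K' c'. stable_prefix (n \<oplus> \<one>) K' c'"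
proof -
  obtain K1 where K1: "K \<preceq> K1" and long: "\<And>k m. K1 \<preceq> k \<Longrightarrow> len (hseq k) m \<Longrightarrow> n \<prec> m"
    using stable_prefix_eventually_longer[OF sp] by blast
  obtain ks vs where ks: "K1 \<preceq> ks" "entry (hseq ks) n vs"
    and stable: "\<And>k v. ks \<preceq> k \<Longrightarrow> entry (hseq k) n v \<Longrightarrow> v = vs"
    by (rule stable_prefix_entry_stabilises[OF sp K1]) (use long in blast)+
  obtain ms where "len (hseq ks) ms" "n \<prec> ms" using long[OF ks(1)] hseq_len by blast
  moreover have "entry c' j y"
    if ksk: "ks \<preceq> k" and Hk: "pr M k c' \<in> H" and jn: "j \<prec> n \<oplus> \<one>"
      and dj: "entry (hseq ks) j y" for k c' j y
  proof -
    have Kk: "K \<preceq> ks" "K \<preceq> k" using K1 ks(1) ksk L.order_trans by blast+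
    have c': "c' = hseq k" using Hk hseq_uniq by blast
    consider "j \<prec> n" | "j = n" using jn less_suc by blast
    then show ?thesis
    proof cases
      case 1
      then show ?thesis using stable_prefix_agree[OF sp] Kk dj c' by blast
    next
      case 2
      obtain v where v: "entry (hseq k) n v"
        using long ks(1) ksk L.order_trans hseq_len in_tree_fill[OF hseq_in_tree] by metis
      have "v = vs" using stable[OF ksk v] .
      moreover have "y = vs" using stable[of ks y] dj 2 by blast
      ultimately show ?thesis using v c' 2 by simp
    qed
  qed
  ultimately have "stable_prefix (n \<oplus> \<one>) ks (hseq ks)"
    unfolding stable_prefix_def using hseq_in_H suc_le_iff by blast
  then show ?thesis by blast
qed

lemma stable_prefix_exists: "\<exists>K c. stable_prefix n K c"
proof -
  have "\<forall>n. \<exists>K c. stable_prefix n K c"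
  proof (rule arith_induct[where E="env_with H" and e="\<lambda>_. 0" and v=0 and
      p="ExN 1 (ExN 2 (stable_prefixF 10 (Var 0) (Var 1) (Var 2)))"])
    have "stable_prefix \<zero> \<zero> (hseq \<zero>)" unfolding stable_prefix_def using hseq_in_H hseq_len zero_le not_less_zero by blast
    then show "\<exists>K c. stable_prefix \<zero> K c" by blast
  qed (use stable_prefix_succ env_with_sets[OF sH] in \<open>auto simp: env_with_def\<close>)
  then show ?thesis by blast
qed

text \<open>The limit path: its \<open>n\<close>-th entry is the eventual \<open>n\<close>-th entry of \<open>hseq k\<close>.\<close>

definition path_entry :: "nat \<Rightarrow> nat \<Rightarrow> bool" where
  "path_entry n y \<longleftrightarrow> (\<exists>K c. stable_prefix (n \<oplus> \<one>) K c \<and> entry c n y)"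

lemma path_entry_ex: "\<exists>y. path_entry n y"
proof -
  obtain K c where sp: "stable_prefix (n \<oplus> \<one>) K c" using stable_prefix_exists by blast
  then obtain m where "len c m" "n \<oplus> \<one> \<preceq> m" unfolding stable_prefix_def by blast
  then obtain y where "entry c n y"
    using in_tree_fill[OF hseq_in_tree] stable_prefix_hseq[OF sp] suc_le_iff by metis
  then show ?thesis unfolding path_entry_def using sp by blast
qed

lemma path_entry_common:
  assumes "path_entry n y" "path_entry n' y'"
  shows "\<exists>k. entry (hseq k) n y \<and> entry (hseq k) n' y'"
proof -
  obtain K c K' c' where sp: "stable_prefix (n \<oplus> \<one>) K c" "entry c n y"
    and sp': "stable_prefix (n' \<oplus> \<one>) K' c'" "entry c' n' y'"
    using assms unfolding path_entry_def by blast
  have "K \<preceq> L.max K K'" "K' \<preceq> L.max K K'" by (auto simp: L.le_max_iff_disj)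
  then show ?thesis
    using stable_prefix_agree[OF sp(1)] stable_prefix_agree[OF sp'(1)] sp(2) sp'(2) less_suc_self
    by blast
qed

lemma path_entry_uniq: "path_entry n y \<Longrightarrow> path_entry n y' \<Longrightarrow> y = y'"
  using path_entry_common in_tree_uniq[OF hseq_in_tree] by metis

lemma path_entry_pair:
  assumes "path_entry n y"
  shows "\<exists>x w. y = pr M x w \<and> x \<in> DA \<and> w \<in> DB"
proof -
  obtain k where "entry (hseq k) n y" using path_entry_common[OF assms assms] by blast
  then show ?thesis using hseq_in_tree[of k] by (elim in_treeD) blast
qed

lemma path_entry_step:
  assumes "path_entry n (pr M x w)" "path_entry (n \<oplus> \<one>) (pr M x' w')"
  shows "pr M x' x \<in> RA \<and> pr M w' w \<in> RB"
proof -
  obtain k where "entry (hseq k) n (pr M x w)" "entry (hseq k) (n \<oplus> \<one>) (pr M x' w')"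
    using path_entry_common[OF assms] by blast
  then show ?thesis using hseq_in_tree[of k] by (elim in_treeD) blast
qed

lemma desc_seq_path_projection:
  fixes f :: "nat \<Rightarrow> nat \<Rightarrow> nat"
  assumes sF: "{a. \<exists>n x w. a = pr M n (f x w) \<and> path_entry n (pr M x w)} \<in> sets M"
    and step: "\<And>n x w x' w'. path_entry n (pr M x w) \<Longrightarrow> path_entry (n \<oplus> \<one>) (pr M x' w') \<Longrightarrow>
      pr M (f x' w') (f x w) \<in> R"
    and field: "\<And>u v. pr M u v \<in> R \<Longrightarrow> u \<in> D \<and> v \<in> D"
  shows "\<exists>F\<in>sets M. desc_seq M D R F"
proof
  let ?F = "{a. \<exists>n x w. a = pr M n (f x w) \<and> path_entry n (pr M x w)}"
  have mem: "pr M i y \<in> ?F \<longleftrightarrow> (\<exists>x w. y = f x w \<and> path_entry i (pr M x w))" for i y by auto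
  have "\<exists>!y. pr M i y \<in> ?F" for i
  proof -
    obtain x w where xw: "path_entry i (pr M x w)" using path_entry_ex path_entry_pair by metis
    show ?thesis unfolding mem
    proof (rule ex1I[of _ "f x w"])
      fix y assume "\<exists>x' w'. y = f x' w' \<and> path_entry i (pr M x' w')"
      then show "y = f x w" using path_entry_uniq[OF xw] by fastforce
    qed (use xw in blast)
  qed
  moreover have "y \<in> D \<and> y' \<in> D \<and> pr M y' y \<in> R" if "pr M i y \<in> ?F \<and> pr M (i \<oplus> \<one>) y' \<in> ?F" for i y y'
    using that step field unfolding mem by blast
  ultimately show "desc_seq M D R ?F" unfolding desc_seq_def by blast
qed (rule sF)

lemma both_ill_founded:
  "(\<exists>F\<in>sets M. desc_seq M DA RA F) \<and> (\<exists>F\<in>sets M. desc_seq M DB RB F)"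
proof
  have "{a. \<exists>n x w. a = pr M n x \<and> path_entry n (pr M x w)} \<in> sets M"
    by (rule definable_set[where E="env_with H" and e="\<lambda>_. 0" and v=0 and
        p="ExN 1 (ExN 2 (ExN 5 (Conj (Equ (Var 0) (PairT (Var 1) (Var 2))) (ExN 3 (ExN 4 (Conj (stable_prefixF 10 (Add (Var 1) One) (Var 3) (Var 4)) (entryF 40 (Var 4) (Var 1) (PairT (Var 2) (Var 5)))))))))"])
       (rule env_with_sets[OF sH], simp add: env_with_def path_entry_def)
  then show "\<exists>F\<in>sets M. desc_seq M DA RA F"
    by (rule desc_seq_path_projection) (use path_entry_step orderA(1) in blast)+
next
  have "{a. \<exists>n x w. a = pr M n w \<and> path_entry n (pr M x w)} \<in> sets M"
    by (rule definable_set[where E="env_with H" and e="\<lambda>_. 0" and v=0 and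
        p="ExN 1 (ExN 2 (ExN 5 (Conj (Equ (Var 0) (PairT (Var 1) (Var 5))) (ExN 3 (ExN 4 (Conj (stable_prefixF 10 (Add (Var 1) One) (Var 3) (Var 4)) (entryF 40 (Var 4) (Var 1) (PairT (Var 2) (Var 5)))))))))"])
       (rule env_with_sets[OF sH], simp add: env_with_def path_entry_def)
  then show "\<exists>F\<in>sets M. desc_seq M DB RB F"
    by (rule desc_seq_path_projection) (use path_entry_step orderB in blast)+
qed

end

section \<open>Embedding \<open>\<alpha>\<close> when \<open>\<beta>\<close> is ill-founded\<close>

definition aboveF :: "trm \<Rightarrow> trm \<Rightarrow> afm" where
  "aboveF ta tx = Conj (In tx 0) (Or (Equ tx ta) (In (PairT ta tx) 1))"

definition greedy_prefixF :: "nat \<Rightarrow> trm \<Rightarrow> trm \<Rightarrow> trm \<Rightarrow> afm" where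
  "greedy_prefixF b ta tc tn = Conj (lenF (b+20) tc tn)
   (Conj (AllN (b+1) (Imp (Less (Var (b+1)) tn) (ExN (b+2) (entryF (b+20) tc (Var (b+1)) (Var (b+2))))))
   (Conj (AllN (b+1) (AllN (b+2) (AllN (b+3) (Imp (Conj (entryF (b+20) tc (Var (b+1)) (Var (b+2))) (entryF (b+20) tc (Var (b+1)) (Var (b+3)))) (Equ (Var (b+2)) (Var (b+3)))))))
   (Conj (AllN (b+1) (AllN (b+2) (Imp (entryF (b+20) tc (Var (b+1)) (Var (b+2))) (ExN (b+3) (ExN (b+4) (Conj (Equ (Var (b+2)) (PairT (Var (b+3)) (Var (b+4)))) (In (PairT (Var (b+1)) (Var (b+4))) 6)))))))
   (Conj (AllN (b+1) (AllN (b+2) (Imp (entryF (b+20) tc Zero (PairT (Var (b+1)) (Var (b+2)))) (Conj (aboveF ta (Var (b+1))) (AllN (b+3) (Imp (aboveF ta (Var (b+3))) (Leq (Var (b+1)) (Var (b+3)))))))))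
   (AllN (b+1) (AllN (b+2) (AllN (b+3) (AllN (b+4) (AllN (b+5) (Imp (Conj (entryF (b+20) tc (Var (b+1)) (PairT (Var (b+2)) (Var (b+3)))) (entryF (b+20) tc (Add (Var (b+1)) One) (PairT (Var (b+4)) (Var (b+5)))))
      (Conj (aboveF ta (Var (b+4))) (Conj (In (PairT (Var (b+4)) (Var (b+2))) 1) (AllN (b+6) (Imp (Conj (aboveF ta (Var (b+6))) (In (PairT (Var (b+6)) (Var (b+2))) 1)) (Leq (Var (b+4)) (Var (b+6)))))))))))))))))"

definition greedy_seqF :: "nat \<Rightarrow> trm \<Rightarrow> trm \<Rightarrow> afm" where
  "greedy_seqF b ta tc = ExN (b+40) (Conj (greedy_prefixF (b+40) ta tc (Add (Var (b+40)) One))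
     (AllN (b+41) (AllN (b+42) (Imp (entryF (b+60) tc (Var (b+40)) (PairT (Var (b+41)) (Var (b+42)))) (Equ (Var (b+41)) ta)))))"

locale right_ill_founded = two_orders +
  fixes Fg :: "nat set"
  assumes sFg: "Fg \<in> sets M" and dg: "desc_seq M DB RB Fg"
begin

definition above :: "nat \<Rightarrow> nat \<Rightarrow> bool" where
  "above a x \<longleftrightarrow> x \<in> DA \<and> (x = a \<or> pr M a x \<in> RA)"

definition greedy_prefix :: "nat \<Rightarrow> nat \<Rightarrow> nat \<Rightarrow> bool" where
  "greedy_prefix a c n \<longleftrightarrow> len c n \<and> (\<forall>j. j \<prec> n \<longrightarrow> (\<exists>y. entry c j y))
   \<and> (\<forall>j y y'. entry c j y \<and> entry c j y' \<longrightarrow> y = y')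
   \<and> (\<forall>j y. entry c j y \<longrightarrow> (\<exists>x w. y = pr M x w \<and> pr M j w \<in> Fg))
   \<and> (\<forall>x w. entry c \<zero> (pr M x w) \<longrightarrow> above a x \<and> (\<forall>z. above a z \<longrightarrow> x \<preceq> z))
   \<and> (\<forall>j x w x' w'. entry c j (pr M x w) \<and> entry c (j \<oplus> \<one>) (pr M x' w') \<longrightarrow>
        above a x' \<and> pr M x' x \<in> RA \<and> (\<forall>z. above a z \<and> pr M z x \<in> RA \<longrightarrow> x' \<preceq> z))"

definition greedy_seq :: "nat \<Rightarrow> nat \<Rightarrow> bool" where
  "greedy_seq a c \<longleftrightarrow> (\<exists>n. greedy_prefix a c (n \<oplus> \<one>) \<and> (\<forall>x w. entry c n (pr M x w) \<longrightarrow> x = a))"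

lemma sat_aboveF[simp]:
  "E 0 = DA \<Longrightarrow> E 1 = RA \<Longrightarrow> sat M e E (aboveF ta tx) \<longleftrightarrow> above (ev M e ta) (ev M e tx)"
  by (auto simp: aboveF_def above_def)

lemma sat_greedy_prefixF[simp]:
  assumes "E 0 = DA" "E 1 = RA" "E 6 = Fg" "below (b+1) ta" "below (b+1) tc" "below (b+1) tn"
  shows "sat M e E (greedy_prefixF b ta tc tn) \<longleftrightarrow> greedy_prefix (ev M e ta) (ev M e tc) (ev M e tn)"
proof -
  have [simp]: "below (b+20) ta" "below (b+20) tc" "below (b+20) tn" using assms below_mono by fastforce+
  have [simp]: "\<And>v. b < v \<Longrightarrow> v \<notin> tvars ta" "\<And>v. b < v \<Longrightarrow> v \<notin> tvars tc" "\<And>v. b < v \<Longrightarrow> v \<notin> tvars tn"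
    using assms below_notin by fastforce+
  show ?thesis using assms(1-3) by (simp add: greedy_prefixF_def greedy_prefix_def)
qed

lemma sat_greedy_seqF[simp]:
  assumes "E 0 = DA" "E 1 = RA" "E 6 = Fg" "below (b+1) ta" "below (b+1) tc"
  shows "sat M e E (greedy_seqF b ta tc) \<longleftrightarrow> greedy_seq (ev M e ta) (ev M e tc)"
proof -
  have b1: "below (b+40+1) ta" "below (b+40+1) tc" "below (b+40+1) (Add (Var (b+40)) One)"
    using assms below_mono by fastforce+
  have b2: "below (b+60) ta" "below (b+60) tc" using assms below_mono by fastforce+
  have [simp]: "\<And>v. b < v \<Longrightarrow> v \<notin> tvars ta" "\<And>v. b < v \<Longrightarrow> v \<notin> tvars tc"
    using assms below_notin by fastforce+
  have g: "sat M e' E (greedy_prefixF (b+40) ta tc (Add (Var (b+40)) One))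
      \<longleftrightarrow> greedy_prefix (ev M e' ta) (ev M e' tc) (e' (b+40) \<oplus> \<one>)" for e'
    using sat_greedy_prefixF[OF assms(1-3) b1] by simp
  show ?thesis unfolding greedy_seqF_def greedy_seq_def using b2 by (simp add: g)
qed

definition bseq :: "nat \<Rightarrow> nat" where "bseq j = (THE w. pr M j w \<in> Fg)"

lemma bseq_in: "pr M j (bseq j) \<in> Fg" and bseq_uniq: "pr M j w \<in> Fg \<Longrightarrow> w = bseq j"
proof -
  have "\<exists>!w. pr M j w \<in> Fg" using dg unfolding desc_seq_def by blast
  then show "pr M j (bseq j) \<in> Fg" unfolding bseq_def by (rule theI')
  then show "pr M j w \<in> Fg \<Longrightarrow> w = bseq j" using \<open>\<exists>!w. pr M j w \<in> Fg\<close> by blast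
qed

lemma bseq_DB: "bseq j \<in> DB" and bseq_step: "pr M (bseq (j \<oplus> \<one>)) (bseq j) \<in> RB"
  using dg bseq_in[of j] bseq_in[of "j \<oplus> \<one>"] unfolding desc_seq_def by blast+

lemma above_refl: "a \<in> DA \<Longrightarrow> above a a"
  by (simp add: above_def)

lemma above_DA: "above a x \<Longrightarrow> x \<in> DA"
  by (simp add: above_def)

lemma above_trans: "above a a' \<Longrightarrow> above a' x \<Longrightarrow> above a x"
  unfolding above_def using orderA(3) by blast

lemma above_if_less: "pr M a a' \<in> RA \<Longrightarrow> above a a'"
  unfolding above_def using orderA(1) by blast

lemma above_less: "above a x \<Longrightarrow> x \<noteq> a \<Longrightarrow> pr M a x \<in> RA"
  by (simp add: above_def)

lemma above_not_less: "above a x \<Longrightarrow> pr M x a \<notin> RA"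
  unfolding above_def using orderA(2,3) by blast

lemma greedy_prefixD:
  assumes "greedy_prefix a c n"
  shows "len c n" "\<And>j. j \<prec> n \<Longrightarrow> \<exists>y. entry c j y"
    "\<And>j y y'. entry c j y \<Longrightarrow> entry c j y' \<Longrightarrow> y = y'"
    "\<And>j y. entry c j y \<Longrightarrow> \<exists>x. y = pr M x (bseq j)"
    "\<And>x w z. entry c \<zero> (pr M x w) \<Longrightarrow> above a x \<and> (above a z \<longrightarrow> x \<preceq> z)"
    "\<And>j x w x' w' z. entry c j (pr M x w) \<Longrightarrow> entry c (j \<oplus> \<one>) (pr M x' w') \<Longrightarrow>
        above a x' \<and> pr M x' x \<in> RA \<and> (above a z \<and> pr M z x \<in> RA \<longrightarrow> x' \<preceq> z)"
  using assms unfolding greedy_prefix_def using bseq_uniq by blast+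

lemma greedy_prefix_entry: "greedy_prefix a c n \<Longrightarrow> j \<prec> n \<Longrightarrow> \<exists>x. entry c j (pr M x (bseq j))"
  using greedy_prefixD(2,4) by metis

lemma greedy_prefix_pred:
  assumes g: "greedy_prefix a c n" and d: "entry c (j \<oplus> \<one>) y"
  obtains x where "entry c j (pr M x (bseq j))"
proof -
  have "j \<oplus> \<one> \<prec> n" using d greedy_prefixD(1)[OF g] entry_less_len by blast
  then show ?thesis using greedy_prefix_entry[OF g] less_suc_self less_trans that by blast
qed

lemma greedy_prefix_above:
  assumes g: "greedy_prefix a c n" and d: "entry c j (pr M x w)"
  shows "above a x"
proof (cases "j = \<zero>")
  case True
  then show ?thesis using greedy_prefixD(5)[OF g] d by blast
next
  case False
  then obtain j0 where j0: "j = j0 \<oplus> \<one>" using zero_or_suc by blast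
  obtain x0 where "entry c j0 (pr M x0 (bseq j0))" using greedy_prefix_pred[OF g] d j0 by blast
  then show ?thesis using greedy_prefixD(6)[OF g] d j0 by blast
qed

lemma greedy_prefix_le: 
  assumes g: "greedy_prefix a c n" and d: "entry c j (pr M x w)"
  shows "x \<preceq> a"
proof -
  have aD: "a \<in> DA" using greedy_prefix_above[OF g d] orderA(1) unfolding above_def by blast
  show "x \<preceq> a"
  proof (cases "j = \<zero>")
    case True
    then show ?thesis using greedy_prefixD(5)[OF g] d above_refl[OF aD] by blast
  next
    case False
    then obtain j0 where j0: "j = j0 \<oplus> \<one>" using zero_or_suc by blast
    then obtain x0 where d0: "entry c j0 (pr M x0 (bseq j0))" using greedy_prefix_pred[OF g] d by blast
    have st: "above a x \<and> pr M x x0 \<in> RA \<and> (above a a \<and> pr M a x0 \<in> RA \<longrightarrow> x \<preceq> a)"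
      using greedy_prefixD(6)[OF g d0] d j0 by blast
    have "x0 \<noteq> a" using st above_not_less by blast
    then have "pr M a x0 \<in> RA" using above_less greedy_prefix_above[OF g d0] by blast
    then show ?thesis using st above_refl[OF aD] by blast
  qed
qed

text \<open>The greedy choices are numerically increasing: each \<open>x\<^bsub>j+1\<^esub>\<close> was a candidate when
  \<open>x\<^sub>j\<close> was chosen.\<close>

lemma greedy_prefix_index_le:
  assumes g: "greedy_prefix a c n"
  shows "entry c j (pr M x w) \<Longrightarrow> j \<preceq> x"
proof -
  have "\<forall>j. \<forall>x w. entry c j (pr M x w) \<longrightarrow> j \<preceq> x"
  proof (rule arith_induct_nosets[where e="\<lambda>_. c" and
        p="AllN 3 (AllN 4 (Imp (entryF 10 (Var 1) (Var 0) (PairT (Var 3) (Var 4))) (Leq (Var 0) (Var 3))))"])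
    fix j assume IH: "\<forall>x w. entry c j (pr M x w) \<longrightarrow> j \<preceq> x"
    show "\<forall>x w. entry c (j \<oplus> \<one>) (pr M x w) \<longrightarrow> j \<oplus> \<one> \<preceq> x"
    proof (intro allI impI)
      fix x' w' assume d': "entry c (j \<oplus> \<one>) (pr M x' w')"
      obtain x where d: "entry c j (pr M x (bseq j))" using greedy_prefix_pred[OF g d'] .
      have st: "above a x' \<and> pr M x' x \<in> RA" using greedy_prefixD(6)[OF g d d'] by blast
      have "x \<preceq> x'"
      proof (cases "j = \<zero>")
        case True
        then show ?thesis using greedy_prefixD(5)[OF g] d st by blast
      next
        case False
        then obtain j0 where j0: "j = j0 \<oplus> \<one>" using zero_or_suc by blast
        then obtain x0 where d0: "entry c j0 (pr M x0 (bseq j0))" using greedy_prefix_pred[OF g] d by blast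
        have "pr M x x0 \<in> RA" using greedy_prefixD(6)[OF g d0] d j0 by blast
        then have "pr M x' x0 \<in> RA" using st orderA(3) by blast
        then show ?thesis using greedy_prefixD(6)[OF g d0] d j0 st by blast
      qed
      moreover have "x \<noteq> x'" using st orderA(2) by blast
      ultimately have "j \<prec> x'" using IH d L.le_less_trans by blast
      then show "j \<oplus> \<one> \<preceq> x'" using suc_le_iff by blast
    qed
  qed (simp_all add: zero_le)
  then show "entry c j (pr M x w) \<Longrightarrow> j \<preceq> x" by blast
qed

lemma greedy_prefix_empty: "len c \<zero> \<Longrightarrow> greedy_prefix a c \<zero>"
  unfolding greedy_prefix_def using entry_less_len not_less_zero by blast

lemma greedy_prefix_snoc:
  assumes g: "greedy_prefix a c n" and lc': "len c' (n \<oplus> \<one>)"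
    and c': "\<And>i y. entry c' i y \<longleftrightarrow> entry c i y \<or> (i = n \<and> y = pr M x (bseq n))"
    and x: "above a x"
    and first: "\<And>z. n = \<zero> \<Longrightarrow> above a z \<Longrightarrow> x \<preceq> z"
    and succ: "\<And>m x0 w0. n = m \<oplus> \<one> \<Longrightarrow> entry c m (pr M x0 w0) \<Longrightarrow>
      pr M x x0 \<in> RA \<and> (\<forall>z. above a z \<and> pr M z x0 \<in> RA \<longrightarrow> x \<preceq> z)"
  shows "greedy_prefix a c' (n \<oplus> \<one>)"
proof -
  have old: "entry c i y \<Longrightarrow> i \<prec> n" for i y using entry_less_len greedy_prefixD(1)[OF g] by blast
  have at0: "above a x0 \<and> (\<forall>z. above a z \<longrightarrow> x0 \<preceq> z)" if "entry c' \<zero> (pr M x0 w0)" for x0 w0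
  proof (cases "entry c \<zero> (pr M x0 w0)")
    case True
    then show ?thesis using greedy_prefixD(5)[OF g] by blast
  next
    case False
    then have "n = \<zero>" "x0 = x" using that c' by auto
    then show ?thesis using x first by blast
  qed
  have step: "above a x2 \<and> pr M x2 x1 \<in> RA \<and> (\<forall>z. above a z \<and> pr M z x1 \<in> RA \<longrightarrow> x2 \<preceq> z)"
    if d1: "entry c' j (pr M x1 w1)" and d2: "entry c' (j \<oplus> \<one>) (pr M x2 w2)" for j x1 w1 x2 w2
  proof (cases "j \<oplus> \<one> = n")
    case True
    then have "j \<noteq> n" using less_suc_self by (metis less_irrefl)
    then have "entry c j (pr M x1 w1)" using d1 c' by blast
    moreover have "x2 = x" using d2 c' old True by (metis less_irrefl pr_inj_iff)
    ultimately show ?thesis using succ[OF True[symmetric]] x by blast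
  next
    case False
    then have e2: "entry c (j \<oplus> \<one>) (pr M x2 w2)" using d2 c' by blast
    then have "j \<noteq> n" using old less_suc_self less_asym by metis
    then have "entry c j (pr M x1 w1)" using d1 c' by blast
    then show ?thesis using greedy_prefixD(6)[OF g _ e2] by blast
  qed
  have fill: "\<forall>j. j \<prec> n \<oplus> \<one> \<longrightarrow> (\<exists>y. entry c' j y)" using greedy_prefixD(2)[OF g] c' less_suc by blast
  have uniq: "\<forall>j y y'. entry c' j y \<and> entry c' j y' \<longrightarrow> y = y'"
    using c' greedy_prefixD(3)[OF g] old by blast
  have pairs: "\<forall>j y. entry c' j y \<longrightarrow> (\<exists>x w. y = pr M x w \<and> pr M j w \<in> Fg)"
    using c' greedy_prefixD(4)[OF g] bseq_in by blast
  have first_entry: "\<forall>x w. entry c' \<zero> (pr M x w) \<longrightarrow> above a x \<and> (\<forall>z. above a z \<longrightarrow> x \<preceq> z)"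
    using at0 by blast
  have next_entry: "\<forall>j x w x' w'. entry c' j (pr M x w) \<and> entry c' (j \<oplus> \<one>) (pr M x' w') \<longrightarrow>
      above a x' \<and> pr M x' x \<in> RA \<and> (\<forall>z. above a z \<and> pr M z x \<in> RA \<longrightarrow> x' \<preceq> z)"
    using step by blast
  show ?thesis unfolding greedy_prefix_def by (intro conjI; fact)
qed

lemma greedy_prefix_extend:
  assumes aD: "a \<in> DA" and g: "greedy_prefix a c n"
    and not_done: "\<And>m x w. n = m \<oplus> \<one> \<Longrightarrow> entry c m (pr M x w) \<Longrightarrow> x \<noteq> a"
  shows "\<exists>c'. greedy_prefix a c' (n \<oplus> \<one>)"
proof -
  let ?C = "\<lambda>z. above a z \<and> (\<forall>m x0 w0. n = m \<oplus> \<one> \<and> entry c m (pr M x0 w0) \<longrightarrow> pr M z x0 \<in> RA)"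
  have Ca: "?C a" using above_refl[OF aD] not_done above_less greedy_prefix_above[OF g] by blast
  have "\<exists>x. ?C x \<and> (\<forall>z. ?C z \<longrightarrow> x \<preceq> z)"
    by (rule least_number[where E="env_with Fg" and e="\<lambda>i. if i = 1 then a else if i = 2 then n else c" and v=0 and
          p="Conj (aboveF (Var 1) (Var 0)) (AllN 4 (AllN 5 (AllN 6 (Imp (Conj (Equ (Var 2) (Add (Var 4) One)) (entryF 10 (Var 3) (Var 4) (PairT (Var 5) (Var 6)))) (In (PairT (Var 0) (Var 5)) 1)))))"
          and x=a])
       (use env_with_sets[OF sFg] Ca in \<open>auto simp: env_with_def\<close>)
  then obtain x where Cx: "?C x" and xmin: "\<And>z. ?C z \<Longrightarrow> x \<preceq> z" by blast
  have fn: "\<And>i. i \<prec> n \<Longrightarrow> \<exists>!y. entry c i y" using greedy_prefixD(2,3)[OF g] by blast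
  obtain c' where lc': "len c' (n \<oplus> \<one>)"
    and c': "\<And>i y. entry c' i y \<longleftrightarrow> entry c i y \<or> (i = n \<and> y = pr M x (bseq n))"
    using seq_snoc[OF greedy_prefixD(1)[OF g] fn] by blast
  have first: "x \<preceq> z" if "n = \<zero>" "above a z" for z
    using that xmin by simp
  have succ: "pr M x x0 \<in> RA \<and> (\<forall>z. above a z \<and> pr M z x0 \<in> RA \<longrightarrow> x \<preceq> z)"
    if nm: "n = m \<oplus> \<one>" and d: "entry c m (pr M x0 w0)" for m x0 w0
  proof -
    have Cz: "?C z" if "above a z" "pr M z x0 \<in> RA" for z
    proof -
      have "x1 = x0" if "n = m' \<oplus> \<one>" "entry c m' (pr M x1 w1)" for m' x1 w1
      proof -
        have "m' = m" using that(1) nm suc_inj by simp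
        then have "pr M x1 w1 = pr M x0 w0" using greedy_prefixD(3)[OF g] that(2) d by blast
        then show ?thesis by simp
      qed
      then show ?thesis using \<open>above a z\<close> \<open>pr M z x0 \<in> RA\<close> by blast
    qed
    have "pr M x x0 \<in> RA" using Cx nm d by blast
    moreover have "\<forall>z. above a z \<and> pr M z x0 \<in> RA \<longrightarrow> x \<preceq> z" using Cz xmin by blast
    ultimately show ?thesis by blast
  qed
  have "greedy_prefix a c' (n \<oplus> \<one>)"
    by (rule greedy_prefix_snoc[OF g lc' c' conjunct1[OF Cx]]) (use first succ in blast)+
  then show ?thesis by blast
qed

lemma greedy_seq_exists:
  assumes aD: "a \<in> DA"
  shows "\<exists>c. greedy_seq a c"
proof -
  have "\<forall>j. (\<exists>c. greedy_prefix a c j) \<or> (\<exists>c. greedy_seq a c)"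
  proof (rule arith_induct[where E="env_with Fg" and e="\<lambda>_. a" and v=0 and
        p="Or (ExN 1 (greedy_prefixF 10 (Var 2) (Var 1) (Var 0))) (ExN 1 (greedy_seqF 10 (Var 2) (Var 1)))"])
    show "(\<exists>c. greedy_prefix a c \<zero>) \<or> (\<exists>c. greedy_seq a c)"
      using empty_seq_code greedy_prefix_empty by blast
  next
    fix j assume IH: "(\<exists>c. greedy_prefix a c j) \<or> (\<exists>c. greedy_seq a c)"
    show "(\<exists>c. greedy_prefix a c (j \<oplus> \<one>)) \<or> (\<exists>c. greedy_seq a c)"
    proof (cases "\<exists>c. greedy_seq a c")
      case False
      then obtain c where g: "greedy_prefix a c j" using IH by blast
      have "x \<noteq> a" if jm: "j = m \<oplus> \<one>" and d: "entry c m (pr M x w)" for m x w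
      proof
        assume "x = a"
        have "x' = a" if "entry c m (pr M x' w')" for x' w'
        proof -
          have "pr M x' w' = pr M x w" using greedy_prefixD(3)[OF g] that d by blast
          then show ?thesis using \<open>x = a\<close> by simp
        qed
        then have "greedy_seq a c" unfolding greedy_seq_def using g jm by blast
        then show False using False by blast
      qed
      then show ?thesis using greedy_prefix_extend[OF aD g] by blast
    qed blast
  qed (rule env_with_sets[OF sFg], simp add: env_with_def)
  then have "(\<exists>c. greedy_prefix a c (a \<oplus> \<one> \<oplus> \<one>)) \<or> (\<exists>c. greedy_seq a c)" by blast
  moreover have False if g: "greedy_prefix a c (a \<oplus> \<one> \<oplus> \<one>)" for c
  proof -
    obtain x where d: "entry c (a \<oplus> \<one>) (pr M x (bseq (a \<oplus> \<one>)))"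
      using greedy_prefix_entry[OF g] less_suc_self by blast
    have "a \<oplus> \<one> \<preceq> a"
      using greedy_prefix_index_le[OF g d] greedy_prefix_le[OF g d] L.order_trans by blast
    then show False using suc_le_iff less_irrefl by blast
  qed
  ultimately show ?thesis by blast
qed

lemma greedy_seq_last:
  assumes "greedy_seq a c"
  obtains m where "greedy_prefix a c (m \<oplus> \<one>)" "entry c m (pr M a (bseq m))"
proof -
  obtain m where g: "greedy_prefix a c (m \<oplus> \<one>)" and last: "\<forall>x w. entry c m (pr M x w) \<longrightarrow> x = a"
    using assms unfolding greedy_seq_def by blast
  obtain x where "entry c m (pr M x (bseq m))" using greedy_prefix_entry[OF g] less_suc_self by blast
  then show ?thesis using that g last by blast
qed

lemma greedy_prefix_agree:
  assumes gc: "greedy_prefix a c n" and gc': "greedy_prefix a c' n'"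
  shows "j \<prec> n \<Longrightarrow> j \<prec> n' \<Longrightarrow> entry c j y \<longleftrightarrow> entry c' j y"
proof -
  have "\<forall>j. \<forall>y. j \<prec> n \<and> j \<prec> n' \<longrightarrow> (entry c j y \<longleftrightarrow> entry c' j y)"
  proof (rule arith_induct_nosets[where e="\<lambda>i. if i = 1 then c else if i = 2 then c' else if i = 3 then n else n'" and
      p="AllN 5 (Imp (Conj (Less (Var 0) (Var 3)) (Less (Var 0) (Var 4))) (Iff (entryF 10 (Var 1) (Var 0) (Var 5)) (entryF 10 (Var 2) (Var 0) (Var 5))))"])
    show "\<forall>y. \<zero> \<prec> n \<and> \<zero> \<prec> n' \<longrightarrow> (entry c \<zero> y \<longleftrightarrow> entry c' \<zero> y)"
    proof (intro allI impI)
      fix y assume "\<zero> \<prec> n \<and> \<zero> \<prec> n'"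
      then obtain x x' where d: "entry c \<zero> (pr M x (bseq \<zero>))" and d': "entry c' \<zero> (pr M x' (bseq \<zero>))"
        using greedy_prefix_entry[OF gc] greedy_prefix_entry[OF gc'] by blast
      have "x = x'" using greedy_prefixD(5)[OF gc d] greedy_prefixD(5)[OF gc' d'] less_asym by blast
      then show "entry c \<zero> y \<longleftrightarrow> entry c' \<zero> y"
        using d d' greedy_prefixD(3)[OF gc] greedy_prefixD(3)[OF gc'] by metis
    qed
  next
    fix j assume IH: "\<forall>y. j \<prec> n \<and> j \<prec> n' \<longrightarrow> (entry c j y \<longleftrightarrow> entry c' j y)"
    show "\<forall>y. j \<oplus> \<one> \<prec> n \<and> j \<oplus> \<one> \<prec> n' \<longrightarrow> (entry c (j \<oplus> \<one>) y \<longleftrightarrow> entry c' (j \<oplus> \<one>) y)"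
    proof (intro allI impI)
      fix y assume h: "j \<oplus> \<one> \<prec> n \<and> j \<oplus> \<one> \<prec> n'"
      then have jj: "j \<prec> n" "j \<prec> n'" using less_suc_self less_trans by blast+
      obtain xj where dj: "entry c j (pr M xj (bseq j))" using greedy_prefix_entry[OF gc jj(1)] by blast
      then have dj': "entry c' j (pr M xj (bseq j))" using IH jj by blast
      obtain x x' where d: "entry c (j \<oplus> \<one>) (pr M x (bseq (j \<oplus> \<one>)))"
        and d': "entry c' (j \<oplus> \<one>) (pr M x' (bseq (j \<oplus> \<one>)))"
        using greedy_prefix_entry[OF gc] greedy_prefix_entry[OF gc'] h by blast
      have "x = x'"
        using greedy_prefixD(6)[OF gc dj d] greedy_prefixD(6)[OF gc' dj' d'] less_asym by blast
      then show "entry c (j \<oplus> \<one>) y \<longleftrightarrow> entry c' (j \<oplus> \<one>) y"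
        using d d' greedy_prefixD(3)[OF gc] greedy_prefixD(3)[OF gc'] by metis
    qed
  qed simp
  then show "j \<prec> n \<Longrightarrow> j \<prec> n' \<Longrightarrow> entry c j y \<longleftrightarrow> entry c' j y" by blast
qed

text \<open>The element after \<open>a\<close> would lie below \<open>a\<close> but above \<open>a'\<close>, which is above \<open>a\<close>.\<close>

lemma greedy_prefix_stops:
  assumes g: "greedy_prefix a' c n" and aa: "above a a'" and last: "entry c k (pr M a w)"
    and kn: "k \<oplus> \<one> \<prec> n"
  shows False
proof -
  obtain x where "entry c (k \<oplus> \<one>) (pr M x (bseq (k \<oplus> \<one>)))" using greedy_prefix_entry[OF g kn] by blast
  then have "above a' x \<and> pr M x a \<in> RA" using greedy_prefixD(6)[OF g last] by blast
  then show False using above_trans[OF aa] above_not_less by blast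
qed

lemma greedy_seq_same:
  assumes g1: "greedy_seq a c" and g2: "greedy_seq a c'"
  shows "same_seq c c'"
proof -
  obtain m where gc: "greedy_prefix a c (m \<oplus> \<one>)" and lastc: "entry c m (pr M a (bseq m))"
    using greedy_seq_last[OF g1] by blast
  obtain m' where gc': "greedy_prefix a c' (m' \<oplus> \<one>)" and lastc': "entry c' m' (pr M a (bseq m'))"
    using greedy_seq_last[OF g2] by blast
  note agree = greedy_prefix_agree[OF gc gc']
  have aa: "above a a" using greedy_prefix_above[OF gc lastc] .
  have "m = m'"
  proof (rule ccontr)
    assume "m \<noteq> m'"
    then consider "m \<prec> m'" | "m' \<prec> m" using less_linear by blast
    then show False
    proof cases
      case 1
      then show False
        using greedy_prefix_stops[OF gc' aa] agree lastc less_suc_self less_trans add_less_mono by metis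
    next
      case 2
      then show False
        using greedy_prefix_stops[OF gc aa] agree lastc' less_suc_self less_trans add_less_mono by metis
    qed
  qed
  then show ?thesis unfolding same_seq_def
    using agree greedy_prefixD(1)[OF gc] greedy_prefixD(1)[OF gc'] entry_less_len by metis
qed

text \<open>At the first difference, the entry chosen for \<open>a'\<close> was also a candidate for \<open>a\<close>, since
  \<open>a'\<close> is above \<open>a\<close>.\<close>

lemma greedy_prefix_le_at_difference:
  assumes aa: "above a a'" and gc: "greedy_prefix a c n" and gc': "greedy_prefix a' c' n'"
    and agree: "\<And>j y. j \<prec> i \<Longrightarrow> entry c' j y \<Longrightarrow> entry c j y"
    and d: "entry c i (pr M x (bseq i))" and d': "entry c' i (pr M x' (bseq i))"
  shows "x \<preceq> x'"
proof (cases "i = \<zero>")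
  case True
  then show ?thesis
    using greedy_prefixD(5)[OF gc] greedy_prefixD(5)[OF gc'] d d' above_trans[OF aa] by blast
next
  case False
  then obtain j where j: "i = j \<oplus> \<one>" using zero_or_suc by blast
  obtain xj where dj: "entry c' j (pr M xj (bseq j))" using greedy_prefix_pred[OF gc'] d' j by blast
  then have "entry c j (pr M xj (bseq j))" using agree j less_suc_self by blast
  moreover have "above a x' \<and> pr M x' xj \<in> RA"
    using greedy_prefixD(6)[OF gc' dj] d' j above_trans[OF aa] by blast
  ultimately show ?thesis using greedy_prefixD(6)[OF gc] d j by blast
qed

lemma greedy_seq_KB:
  assumes aa: "pr M a a' \<in> RA" and g1: "greedy_seq a c" and g2: "greedy_seq a' c'"
  shows "KB c c'"
proof -
  obtain m where gc: "greedy_prefix a c (m \<oplus> \<one>)" and lastc: "entry c m (pr M a (bseq m))"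
    using greedy_seq_last[OF g1] by blast
  obtain m' where gc': "greedy_prefix a' c' (m' \<oplus> \<one>)" and lastc': "entry c' m' (pr M a' (bseq m'))"
    using greedy_seq_last[OF g2] by blast
  have above_aa': "above a a'" using above_if_less[OF aa] .
  note ln = greedy_prefixD(1)[OF gc] and ln' = greedy_prefixD(1)[OF gc']
  obtain i where i: "i \<preceq> m \<oplus> \<one>" "i \<preceq> m' \<oplus> \<one>"
    and agree: "\<And>j y. j \<prec> i \<Longrightarrow> entry c j y \<longleftrightarrow> entry c' j y"
    and diff: "i = m \<oplus> \<one> \<or> i = m' \<oplus> \<one> \<or> \<not> (\<forall>y. entry c i y \<longleftrightarrow> entry c' i y)"
    using common_prefix[OF ln ln'] by blast
  consider "i = m' \<oplus> \<one>" "i \<prec> m \<oplus> \<one>" | "i = m' \<oplus> \<one>" "i = m \<oplus> \<one>"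
    | "i = m \<oplus> \<one>" "i \<prec> m' \<oplus> \<one>"
    | "i \<prec> m \<oplus> \<one>" "i \<prec> m' \<oplus> \<one>" "\<not> (\<forall>y. entry c i y \<longleftrightarrow> entry c' i y)"
    using i diff by blast
  then show ?thesis
  proof cases
    case 1
    then show ?thesis using KB_extI[OF ln ln'] agree entry_less_len[OF _ ln'] by blast
  next
    case 2
    then have "entry c m' (pr M a' (bseq m'))" using agree lastc' less_suc_self by blast
    moreover have "m = m'" using 2 suc_inj by simp
    ultimately have "pr M a' (bseq m') = pr M a (bseq m)" using lastc greedy_prefixD(3)[OF gc] by blast
    then have "a = a'" by simp
    then show ?thesis using aa orderA(2) by blast
  next
    case 3
    then have "entry c' m (pr M a (bseq m))" using agree lastc less_suc_self by blast
    then show ?thesis using greedy_prefix_stops[OF gc' above_aa'] 3 by blast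
  next
    case 4
    obtain x where d: "entry c i (pr M x (bseq i))" using greedy_prefix_entry[OF gc 4(1)] by blast
    obtain x' where d': "entry c' i (pr M x' (bseq i))" using greedy_prefix_entry[OF gc' 4(2)] by blast
    have "x \<noteq> x'"
      using 4(3) d d' greedy_prefixD(3)[OF gc] greedy_prefixD(3)[OF gc'] by metis
    moreover have "x \<preceq> x'" using greedy_prefix_le_at_difference[OF above_aa' gc gc' _ d d'] agree by blast
    ultimately have "pr M x (bseq i) \<prec> pr M x' (bseq i)" using pr_mono_left by blast
    then show ?thesis using KB_branchI[OF d d'] agree by blast
  qed
qed

lemma greedy_prefix_same_seq:
  assumes g: "greedy_prefix a c n" and s: "same_seq c c'"
  shows "greedy_prefix a c' n"
proof -
  have deq: "entry c' i y = entry c i y" for i y using s unfolding same_seq_def by blast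
  have "len c' n" using s greedy_prefixD(1)[OF g] len_unique unfolding same_seq_def by metis
  then show ?thesis using g unfolding greedy_prefix_def deq by blast
qed

lemma greedy_seq_same_seq:
  assumes g: "greedy_seq a c" and s: "same_seq c c'"
  shows "greedy_seq a c'"
proof -
  have deq: "entry c' i y = entry c i y" for i y using s unfolding same_seq_def by blast
  show ?thesis using g greedy_prefix_same_seq[OF _ s] unfolding greedy_seq_def deq by blast
qed

lemma greedy_seq_in_tree:
  assumes g: "greedy_seq a c"
  shows "in_tree c"
proof -
  obtain m where gc: "greedy_prefix a c (m \<oplus> \<one>)" using greedy_seq_last[OF g] by blast
  have "\<exists>x w. y = pr M x w \<and> x \<in> DA \<and> w \<in> DB" if d: "entry c i y" for i y
  proof -
    obtain x where y: "y = pr M x (bseq i)" using greedy_prefixD(4)[OF gc d] by blast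
    then have "x \<in> DA" using greedy_prefix_above[OF gc] d above_DA by blast
    then show ?thesis using y bseq_DB by blast
  qed
  moreover have "pr M x' x \<in> RA \<and> pr M w' w \<in> RB"
    if "entry c i (pr M x w)" "entry c (i \<oplus> \<one>) (pr M x' w')" for i x w x' w'
  proof -
    have "w = bseq i" "w' = bseq (i \<oplus> \<one>)" using greedy_prefixD(4)[OF gc] that by (metis pr_inj_iff)+
    then show ?thesis using greedy_prefixD(6)[OF gc that] bseq_step by blast
  qed
  ultimately show ?thesis
    unfolding in_tree_def using greedy_prefixD(1-3)[OF gc] by blast
qed

lemma greedy_node_exists:
  assumes aD: "a \<in> DA"
  shows "\<exists>c. node c \<and> greedy_seq a c"
proof -
  obtain c0 where "greedy_seq a c0" using greedy_seq_exists[OF aD] by blast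
  have "\<exists>c. greedy_seq a c \<and> (\<forall>c'. greedy_seq a c' \<longrightarrow> c \<preceq> c')"
    by (rule least_number[where E="env_with Fg" and e="\<lambda>_. a" and v=0 and x=c0 and
        p="greedy_seqF 10 (Var 1) (Var 0)"])
       (use env_with_sets[OF sFg] \<open>greedy_seq a c0\<close> in \<open>simp_all add: env_with_def\<close>)
  then obtain c where g: "greedy_seq a c" and cmin: "\<And>c'. greedy_seq a c' \<Longrightarrow> c \<preceq> c'" by blast
  have "\<not> same_seq c' c" if "c' \<prec> c" for c'
    using that cmin greedy_seq_same_seq[OF g] same_seq_sym less_asym by blast
  then show ?thesis using g greedy_seq_in_tree node_def by blast
qed

lemma embedding_exists: "\<exists>G\<in>sets M. embedding M G DA RA disj_dom disj_rel"
proof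
  let ?G = "{q. \<exists>a c. q = pr M a c \<and> a \<in> DA \<and> c \<in> disj_dom \<and> greedy_seq a c}"
  show "?G \<in> sets M"
    by (rule definable_set[where E="env_with Fg" and e="\<lambda>_. 0" and v=0 and
         p="ExN 1 (ExN 2 (Conj (Equ (Var 0) (PairT (Var 1) (Var 2))) (Conj (In (Var 1) 0) (Conj (In (Var 2) 4) (greedy_seqF 10 (Var 1) (Var 2))))))"])
       (use env_with_sets[OF sFg] in \<open>simp_all add: env_with_def\<close>)
  have mem: "pr M a c \<in> ?G \<longleftrightarrow> a \<in> DA \<and> node c \<and> greedy_seq a c" for a c
    by (simp add: disj_dom_def)
  have "\<exists>!c. pr M a c \<in> ?G" if aD: "a \<in> DA" for a
  proof -
    obtain c where c: "node c" "greedy_seq a c" using greedy_node_exists[OF aD] by blast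
    have "c' = c" if "pr M a c' \<in> ?G" for c'
      using that[unfolded mem] c greedy_seq_same node_eq by blast
    then show ?thesis using mem aD c by blast
  qed
  moreover have "a \<in> DA \<and> c \<in> disj_dom" if "pr M a c \<in> ?G" for a c
    using that[unfolded mem] unfolding disj_dom_def by blast
  moreover have "pr M c c' \<in> disj_rel" if "pr M a c \<in> ?G" "pr M a' c' \<in> ?G" "pr M a a' \<in> RA" for a a' c c'
    using that[unfolded mem] greedy_seq_KB disj_rel_iff by blast
  ultimately show "embedding M ?G DA RA disj_dom disj_rel"
    unfolding embedding_def by blast
qed

end

section \<open>Well-foundedness of \<open>disj(\<alpha>, \<beta>)\<close>\<close>

context aca0
begin

lemma desc_seq_embedding:
  assumes sF: "F \<in> sets M" and dF: "desc_seq M D R F" and sG: "G \<in> sets M"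
    and eG: "embedding M G D R D' R'"
  shows "\<exists>H\<in>sets M. desc_seq M D' R' H"
proof
  let ?H = "{q. \<exists>i c. q = pr M i c \<and> (\<exists>a. pr M i a \<in> F \<and> pr M a c \<in> G)}"
  show "?H \<in> sets M"
    by (rule definable_set[where E="\<lambda>i. if i = 0 then F else G" and e="\<lambda>_. 0" and v=0 and
         p="ExN 1 (ExN 2 (Conj (Equ (Var 0) (PairT (Var 1) (Var 2))) (ExN 3 (Conj (In (PairT (Var 1) (Var 3)) 0) (In (PairT (Var 3) (Var 2)) 1)))))"])
       (use sF sG in simp_all)
  have mem: "pr M i c \<in> ?H \<longleftrightarrow> (\<exists>a. pr M i a \<in> F \<and> pr M a c \<in> G)" for i c by simp
  have Fu: "\<exists>!a. pr M i a \<in> F" for i using dF unfolding desc_seq_def by blast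
  have FD: "a \<in> D" if "pr M i a \<in> F" for i a
    using that Fu[of "i \<oplus> \<one>"] dF unfolding desc_seq_def by blast
  have Gu: "\<exists>!c. pr M a c \<in> G" if "a \<in> D" for a using that eG unfolding embedding_def by blast
  have "\<exists>!c. pr M i c \<in> ?H" for i
    unfolding mem using Fu[of i] FD Gu by metis
  moreover have "y \<in> D' \<and> y' \<in> D' \<and> pr M y' y \<in> R'"
    if yy: "pr M i y \<in> ?H \<and> pr M (i \<oplus> \<one>) y' \<in> ?H" for i y y'
  proof -
    obtain a a' where a: "pr M i a \<in> F" "pr M a y \<in> G" and a': "pr M (i \<oplus> \<one>) a' \<in> F" "pr M a' y' \<in> G"
      using yy[unfolded mem] by blast
    have "pr M a' a \<in> R" using dF a(1) a'(1) unfolding desc_seq_def by blast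
    then show ?thesis using eG a(2) a'(2) unfolding embedding_def by blast
  qed
  ultimately show "desc_seq M D' R' ?H" unfolding desc_seq_def by blast
qed

end

context two_orders
begin

lemma embedding_if_right_ill_founded:
  assumes "\<exists>F\<in>sets M. desc_seq M DB RB F"
  shows "\<exists>G\<in>sets M. embedding M G DA RA disj_dom disj_rel"
proof -
  obtain F where "F \<in> sets M" "desc_seq M DB RB F" using assms by blast
  then interpret right_ill_founded M DA RA DB RB F
    by unfold_locales
  show ?thesis by (rule embedding_exists)
qed

lemma ill_founded_if_disj_ill_founded:
  assumes "H \<in> sets M" "desc_seq M disj_dom disj_rel H"
  shows "(\<exists>F\<in>sets M. desc_seq M DA RA F) \<and> (\<exists>F\<in>sets M. desc_seq M DB RB F)"
proof -
  interpret disj_ill_founded M DA RA DB RB H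
    using assms by unfold_locales
  show ?thesis by (rule both_ill_founded)
qed

lemma WO_disj_iff: "WO M disj_dom disj_rel \<longleftrightarrow> WO M DA RA \<or> WO M DB RB"
proof
  assume w: "WO M disj_dom disj_rel"
  show "WO M DA RA \<or> WO M DB RB"
  proof (rule ccontr)
    assume "\<not> (WO M DA RA \<or> WO M DB RB)"
    then obtain F where "F \<in> sets M" "desc_seq M DA RA F" and "\<exists>F\<in>sets M. desc_seq M DB RB F"
      using loA loB unfolding WO_def by blast
    then show False
      using w embedding_if_right_ill_founded desc_seq_embedding unfolding WO_def by metis
  qed
next
  assume "WO M DA RA \<or> WO M DB RB"
  then show "WO M disj_dom disj_rel"
    using ill_founded_if_disj_ill_founded LO_disj unfolding WO_def by blast
qed

end

theorem lemma5p1: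
  shows "\<exists>thD thR :: afm. \<forall>M e DA RA DB RB.
     ACA0_model M \<and> DA \<in> sets M \<and> RA \<in> sets M \<and> DB \<in> sets M \<and> RB \<in> sets M \<and>
     LO M DA RA \<and> LO M DB RB \<longrightarrow>
       (let Dd = cterm M thD e DA RA DB RB; Rd = cterm M thR e DA RA DB RB in
          LO M Dd Rd \<and>
          (WO M Dd Rd \<longleftrightarrow> WO M DA RA \<or> WO M DB RB) \<and>
          ((\<exists>F\<in>sets M. desc_seq M DB RB F) \<longrightarrow>
             (\<exists>G\<in>sets M. embedding M G DA RA Dd Rd)))"
proof (intro exI allI impI)
  fix M e DA RA DB RB
  assume "ACA0_model M \<and> DA \<in> sets M \<and> RA \<in> sets M \<and> DB \<in> sets M \<and> RB \<in> sets M \<and>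
     LO M DA RA \<and> LO M DB RB"
  then interpret two_orders M DA RA DB RB
    by unfold_locales auto
  show "let Dd = cterm M disj_dom_fm e DA RA DB RB; Rd = cterm M disj_rel_fm e DA RA DB RB in
          LO M Dd Rd \<and>
          (WO M Dd Rd \<longleftrightarrow> WO M DA RA \<or> WO M DB RB) \<and>
          ((\<exists>F\<in>sets M. desc_seq M DB RB F) \<longrightarrow>
             (\<exists>G\<in>sets M. embedding M G DA RA Dd Rd))"
    unfolding Let_def cterm_disj_dom cterm_disj_rel
    using LO_disj WO_disj_iff embedding_if_right_ill_founded by blast
qed

end
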